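(* Let $d\in\mathbb N$ and $K\subset(L^0)^d$. The following are equivalent: (i) $K$ is stable compact; (ii) $K$ is stable, closed and bounded; (iii) $K$ is stable, sequentially closed and bounded; (iv) $K$ is the set of (equivalence classes of) measurable selectors of a measurable correspondence $S_K:\Omega\rightrightarrows\mathbb R^d$ with non-empty compact values. Moreover, in this case the correspondence $S_K$ in (iv) is unique up to a.e. equality.
   Context: $(\Omega,\mathcal F,\mathbb P)$ is a probability space, $L^0$ the real measurable functions modulo a.e. equality, a.e. order, $L^0_{++}=\{r>0\text{ a.e.}\}$. $(L^0)^d$ carries the $L^0$-norm $\|x\|=(\sum_{i=1}^dx_i^2)^{1/2}$ and the topology with base $\{y:\|x-y\|<r\}$, $x\in(L^0)^d$, $r\in L^0_{++}$; "closed" refers to this topology. $K$ is stable if nonempty and $\sum_k1_{A_k}x_k\in K$ for every countable measurable partition $(A_k)$ and $(x_k)\subset K$. $K$ is bounded if there is $r\in L^0$ with $\|x\|\le r$ for all $x\in K$; sequentially closed if $x\in K$ whenever $(x_n)\subset K$ and $x_n\to x$ a.e. A filter on $K$ is stable if it has a filter base which is a collection of stable sets closed under $\sum_k1_{A_k}Y_k=\{\sum_k1_{A_k}y_k:y_k\in Y_k\}$; $K$ is stable compact if it is stable and every stable filter on $K$ has a cluster point in $K$. A correspondence $S:\Omega\rightrightarrows\mathbb R^d$ is measurable if $\{\omega:S(\omega)\cap U\neq\emptyset\}\in\mathcal F$ for each open $U\subset\mathbb R^d$; a measurable selector is a measurable $x:\Omega\to\mathbb R^d$ with $x(\omega)\in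 S(\omega)$ for all $\omega$. *)

theory Defs
  imports "HOL-Probability.Probability"
begin

text \<open>Elements of (L^0)^d are represented by measurable functions Omega -> R^d;
  a subset of (L^0)^d is represented by a saturated set of such functions
  (closed under a.e. equality).\<close>

definition L0 :: "'a measure \<Rightarrow> ('a \<Rightarrow> 'b::euclidean_space) set" where
  "L0 M = borel_measurable M"

definition L0_aeq :: "'a measure \<Rightarrow> ('a \<Rightarrow> 'b) \<Rightarrow> ('a \<Rightarrow> 'b) \<Rightarrow> bool" where
  "L0_aeq M f g \<longleftrightarrow> (AE \<omega> in M. f \<omega> = g \<omega>)"

definition L0_saturated :: "'a measure \<Rightarrow> ('a \<Rightarrow> 'b::euclidean_space) set \<Rightarrow> bool" where
  "L0_saturated M K \<longleftrightarrow> K \<subseteq> L0 M \<and> (\<forall>f\<in>K. \<forall>g\<in>L0 M. L0_aeq M f g \<longrightarrow> g \<in> K)"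

definition L0_partition :: "'a measure \<Rightarrow> (nat \<Rightarrow> 'a set) \<Rightarrow> bool" where
  "L0_partition M A \<longleftrightarrow> (\<forall>k. A k \<in> sets M) \<and> disjoint_family A \<and> (\<Union>k. A k) = space M"

definition L0_paste :: "(nat \<Rightarrow> 'a set) \<Rightarrow> (nat \<Rightarrow> 'a \<Rightarrow> 'b::euclidean_space) \<Rightarrow> 'a \<Rightarrow> 'b" where
  "L0_paste A xs = (\<lambda>\<omega>. \<Sum>k. indicator (A k) \<omega> *\<^sub>R xs k \<omega>)"

definition L0_stable :: "'a measure \<Rightarrow> ('a \<Rightarrow> 'b::euclidean_space) set \<Rightarrow> bool" where
  "L0_stable M K \<longleftrightarrow> L0_saturated M K \<and> K \<noteq> {} \<and>
     (\<forall>A xs. L0_partition M A \<and> (\<forall>k. xs k \<in> K) \<longrightarrow> L0_paste A xs \<in> K)"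

definition L0_paste_set :: "'a measure \<Rightarrow> (nat \<Rightarrow> 'a set) \<Rightarrow> (nat \<Rightarrow> ('a \<Rightarrow> 'b::euclidean_space) set) \<Rightarrow> ('a \<Rightarrow> 'b) set" where
  "L0_paste_set M A Ys = {y \<in> L0 M. \<exists>xs. (\<forall>k. xs k \<in> Ys k) \<and> L0_aeq M y (L0_paste A xs)}"

definition L0_pos :: "'a measure \<Rightarrow> ('a \<Rightarrow> real) \<Rightarrow> bool" where
  "L0_pos M r \<longleftrightarrow> r \<in> borel_measurable M \<and> (AE \<omega> in M. r \<omega> > 0)"

definition L0_ball :: "'a measure \<Rightarrow> ('a \<Rightarrow> 'b::euclidean_space) \<Rightarrow> ('a \<Rightarrow> real) \<Rightarrow> ('a \<Rightarrow> 'b) set" where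
  "L0_ball M x r = {y \<in> L0 M. AE \<omega> in M. norm (x \<omega> - y \<omega>) < r \<omega>}"

definition L0_open :: "'a measure \<Rightarrow> ('a \<Rightarrow> 'b::euclidean_space) set \<Rightarrow> bool" where
  "L0_open M U \<longleftrightarrow> U \<subseteq> L0 M \<and>
     (\<forall>y\<in>U. \<exists>x\<in>L0 M. \<exists>r. L0_pos M r \<and> y \<in> L0_ball M x r \<and> L0_ball M x r \<subseteq> U)"

definition L0_closed :: "'a measure \<Rightarrow> ('a \<Rightarrow> 'b::euclidean_space) set \<Rightarrow> bool" where
  "L0_closed M K \<longleftrightarrow> L0_open M (L0 M - K)"

definition L0_bounded :: "'a measure \<Rightarrow> ('a \<Rightarrow> 'b::euclidean_space) set \<Rightarrow> bool" where
  "L0_bounded M K \<longleftrightarrow> (\<exists>r\<in>borel_measurable M. \<forall>x\<in>K. AE \<omega> in M. norm (x \<omega>) \<le> r \<omega>)"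

definition L0_seq_closed :: "'a measure \<Rightarrow> ('a \<Rightarrow> 'b::euclidean_space) set \<Rightarrow> bool" where
  "L0_seq_closed M K \<longleftrightarrow> (\<forall>xs x. (\<forall>n. xs n \<in> K) \<and> x \<in> L0 M \<and>
      (AE \<omega> in M. (\<lambda>n. xs n \<omega>) \<longlonglongrightarrow> x \<omega>) \<longrightarrow> x \<in> K)"

definition L0_filter :: "'a measure \<Rightarrow> ('a \<Rightarrow> 'b::euclidean_space) set \<Rightarrow> ('a \<Rightarrow> 'b) set set \<Rightarrow> bool" where
  "L0_filter M K \<F> \<longleftrightarrow> (\<forall>F\<in>\<F>. F \<subseteq> K \<and> L0_saturated M F) \<and> K \<in> \<F> \<and> {} \<notin> \<F> \<and>
     (\<forall>F\<in>\<F>. \<forall>G. G \<subseteq> K \<and> L0_saturated M G \<and> F \<subseteq> G \<longrightarrow> G \<in> \<F>) \<and>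
     (\<forall>F\<in>\<F>. \<forall>G\<in>\<F>. F \<inter> G \<in> \<F>)"

definition L0_stable_filter :: "'a measure \<Rightarrow> ('a \<Rightarrow> 'b::euclidean_space) set \<Rightarrow> ('a \<Rightarrow> 'b) set set \<Rightarrow> bool" where
  "L0_stable_filter M K \<F> \<longleftrightarrow> L0_filter M K \<F> \<and>
     (\<exists>\<B>\<subseteq>\<F>. (\<forall>F\<in>\<F>. \<exists>B\<in>\<B>. B \<subseteq> F) \<and> (\<forall>B\<in>\<B>. L0_stable M B) \<and>
        (\<forall>A Ys. L0_partition M A \<and> (\<forall>k. Ys k \<in> \<B>) \<longrightarrow> L0_paste_set M A Ys \<in> \<B>))"

definition L0_cluster :: "'a measure \<Rightarrow> ('a \<Rightarrow> 'b::euclidean_space) set set \<Rightarrow> ('a \<Rightarrow> 'b) \<Rightarrow> bool" where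
  "L0_cluster M \<F> x \<longleftrightarrow> x \<in> L0 M \<and> (\<forall>F\<in>\<F>. \<forall>U. L0_open M U \<and> x \<in> U \<longrightarrow> U \<inter> F \<noteq> {})"

definition L0_stable_compact :: "'a measure \<Rightarrow> ('a \<Rightarrow> 'b::euclidean_space) set \<Rightarrow> bool" where
  "L0_stable_compact M K \<longleftrightarrow> L0_stable M K \<and>
     (\<forall>\<F>. L0_stable_filter M K \<F> \<longrightarrow> (\<exists>x\<in>K. L0_cluster M \<F> x))"

definition meas_corr :: "'a measure \<Rightarrow> ('a \<Rightarrow> 'b::euclidean_space set) \<Rightarrow> bool" where
  "meas_corr M S \<longleftrightarrow> (\<forall>U. open U \<longrightarrow> {\<omega> \<in> space M. S \<omega> \<inter> U \<noteq> {}} \<in> sets M)"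

definition nonempty_compact_values :: "'a measure \<Rightarrow> ('a \<Rightarrow> 'b::euclidean_space set) \<Rightarrow> bool" where
  "nonempty_compact_values M S \<longleftrightarrow> (\<forall>\<omega>\<in>space M. S \<omega> \<noteq> {} \<and> compact (S \<omega>))"

definition L0_selectors :: "'a measure \<Rightarrow> ('a \<Rightarrow> 'b::euclidean_space set) \<Rightarrow> ('a \<Rightarrow> 'b) set" where
  "L0_selectors M S = {x \<in> L0 M. \<exists>y\<in>borel_measurable M. (\<forall>\<omega>\<in>space M. y \<omega> \<in> S \<omega>) \<and> L0_aeq M x y}"

end

theory Submission
  imports Defs
begin

text \<open>
  For a stable set \<open>B\<close>, an exhaustion argument (maximising the measure of events over a family
  that is closed under countable pasting) yields, for each ball of a fixed countable basis of
  \<open>\<real>^d\<close>, an element of \<open>B\<close> that lies in that ball essentially wherever some element of \<open>B\<close> does.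
  The pointwise closure \<open>S_B\<close> of the values of these countably many elements is a measurable
  correspondence, and every element of \<open>B\<close> is a.e. a selector of \<open>S_B\<close>. If \<open>K\<close> is moreover
  sequentially closed, it is exactly the set of selectors of \<open>S_K\<close>, and boundedness makes the
  values compact; conversely the Kuratowski--Ryll-Nardzewski selection theorem shows that the
  selectors of a compact-valued measurable correspondence form a stable, sequentially closed,
  bounded set, and recovers the correspondence up to a null set.

  Stable compactness follows from (iii): a stable filter base is shrunk to a decreasing sequence
  whose \<open>j\<close>-th member \<open>B\<close> has \<open>S_B\<close> essentially missing the \<open>j\<close>-th basis ball wherever some member
  of the base does; a measurable selector of the intersection of these nested compact sets is
  then a cluster point. Conversely,
  cluster points of stable filters generated by pasting-closed families of constraints force
  sequential closedness and boundedness, and for stable sets the \<open>L\<^sup>0\<close>-topology is sequential.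
\<close>

section \<open>Countable pasting and stable sets\<close>

lemma L0_partition_cover: "L0_partition M A \<Longrightarrow> \<omega> \<in> space M \<Longrightarrow> \<exists>k. \<omega> \<in> A k"
  unfolding L0_partition_def by blast

lemma L0_partition_sets: "L0_partition M A \<Longrightarrow> A k \<in> sets M"
  unfolding L0_partition_def by blast

lemma L0_partition_unique: "L0_partition M A \<Longrightarrow> \<omega> \<in> A k \<Longrightarrow> \<omega> \<in> A j \<Longrightarrow> j = k"
  unfolding L0_partition_def disjoint_family_on_def by (metis IntI UNIV_I empty_iff)

lemma L0_paste_sums:
  fixes xs :: "nat \<Rightarrow> 'a \<Rightarrow> 'b::real_normed_vector"
  assumes "L0_partition M A" "\<omega> \<in> A k"
  shows "(\<lambda>j. indicator (A j) \<omega> *\<^sub>R xs j \<omega>) sums xs k \<omega>"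
proof -
  let ?f = "\<lambda>j. indicator (A j) \<omega> *\<^sub>R xs j \<omega>"
  have eq: "?f = (\<lambda>j. if j = k then ?f j else 0)"
  proof (rule ext)
    fix j show "?f j = (if j = k then ?f j else 0)"
    proof (cases "j = k")
      case False
      then have "\<omega> \<notin> A j" using L0_partition_unique[OF assms(1) assms(2), of j] by blast
      then show ?thesis using False by simp
    qed simp
  qed
  have "?f k = xs k \<omega>" using assms(2) by simp
  with sums_single[of k ?f] eq show ?thesis by simp
qed

lemma L0_paste_eq: "L0_partition M A \<Longrightarrow> \<omega> \<in> A k \<Longrightarrow> L0_paste A xs \<omega> = xs k \<omega>"
  unfolding L0_paste_def using L0_paste_sums[of M A \<omega> k xs] sums_unique by metis

lemma borel_measurable_L0_paste:
  assumes A: "L0_partition M A" and xs: "\<And>k. xs k \<in> borel_measurable M"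
  shows "L0_paste A xs \<in> borel_measurable M"
proof (rule borel_measurable_LIMSEQ_metric)
  show "(\<lambda>\<omega>. \<Sum>j<n. indicator (A j) \<omega> *\<^sub>R xs j \<omega>) \<in> borel_measurable M" for n
    using L0_partition_sets[OF A] xs by measurable
  fix \<omega> assume "\<omega> \<in> space M"
  then obtain k where k: "\<omega> \<in> A k" using L0_partition_cover[OF A] by blast
  show "(\<lambda>n. \<Sum>j<n. indicator (A j) \<omega> *\<^sub>R xs j \<omega>) \<longlonglongrightarrow> L0_paste A xs \<omega>"
    using L0_paste_sums[OF A k, of xs] L0_paste_eq[OF A k, of xs] by (simp add: sums_def)
qed

lemma L0_pos_paste:
  assumes A: "L0_partition M A" and rs: "\<And>k. L0_pos M (rs k)"
  shows "L0_pos M (L0_paste A rs)"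
  unfolding L0_pos_def
proof
  show "L0_paste A rs \<in> borel_measurable M"
    using borel_measurable_L0_paste[OF A] rs unfolding L0_pos_def by blast
  have "AE \<omega> in M. \<forall>k. 0 < rs k \<omega>" using rs unfolding L0_pos_def by (subst AE_all_countable) blast
  then show "AE \<omega> in M. 0 < L0_paste A rs \<omega>" using AE_space
  proof eventually_elim
    case (elim \<omega>)
    obtain k where k: "\<omega> \<in> A k" using L0_partition_cover[OF A elim(2)] by blast
    show ?case using elim(1) L0_paste_eq[OF A k, of rs] by simp
  qed
qed

definition first_hit_partition :: "'a measure \<Rightarrow> (nat \<Rightarrow> 'a set) \<Rightarrow> nat \<Rightarrow> 'a set" where
  "first_hit_partition M E k =
     (if k = 0 then disjointed E 0 \<union> (space M - (\<Union>i. E i)) else disjointed E k)"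

lemma first_hit_partition_subset:
  "first_hit_partition M E k \<subseteq> disjointed E k \<union> (space M - (\<Union>i. E i))"
  unfolding first_hit_partition_def by auto

lemma disjoint_family_first_hit_partition: "disjoint_family (first_hit_partition M E)"
proof (unfold disjoint_family_on_def, intro ballI impI)
  fix m n :: nat assume "m \<noteq> n"
  have dj: "disjointed E m \<inter> disjointed E n = {}"
    using disjoint_family_disjointed[of E] \<open>m \<noteq> n\<close> unfolding disjoint_family_on_def by blast
  have sub: "disjointed E i \<subseteq> (\<Union>i. E i)" for i using disjointed_subset[of E i] by blast
  have "m = 0 \<or> n = 0 \<or> (first_hit_partition M E m = disjointed E m \<and> first_hit_partition M E n = disjointed E n)"
    unfolding first_hit_partition_def by simp
  then show "first_hit_partition M E m \<inter> first_hit_partition M E n = {}"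
  proof (elim disjE)
    assume "m = 0"
    then have "first_hit_partition M E n = disjointed E n"
      using \<open>m \<noteq> n\<close> by (simp add: first_hit_partition_def)
    then show ?thesis using dj sub[of n] first_hit_partition_subset[of M E m] by blast
  next
    assume "n = 0"
    then have "first_hit_partition M E m = disjointed E m"
      using \<open>m \<noteq> n\<close> by (simp add: first_hit_partition_def)
    then show ?thesis using dj sub[of m] first_hit_partition_subset[of M E n] by blast
  qed (use dj in simp)
qed

lemma UN_first_hit_partition:
  assumes E: "\<And>k. E k \<in> sets M"
  shows "(\<Union>k. first_hit_partition M E k) = space M"
proof
  have sub: "\<And>k. E k \<subseteq> space M" using sets.sets_into_space[OF E] by blast
  show "(\<Union>k. first_hit_partition M E k) \<subseteq> space M"
  proof
    fix \<omega> assume "\<omega> \<in> (\<Union>k. first_hit_partition M E k)"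
    then obtain k where "\<omega> \<in> first_hit_partition M E k" by blast
    then have "\<omega> \<in> disjointed E k \<or> \<omega> \<in> space M" using first_hit_partition_subset[of M E k] by blast
    then show "\<omega> \<in> space M" using disjointed_subset[of E k] sub[of k] by blast
  qed
  show "space M \<subseteq> (\<Union>k. first_hit_partition M E k)"
  proof
    fix \<omega> assume "\<omega> \<in> space M"
    show "\<omega> \<in> (\<Union>k. first_hit_partition M E k)"
    proof (cases "\<omega> \<in> (\<Union>i. E i)")
      case True
      then obtain k where k: "\<omega> \<in> disjointed E k" using UN_disjointed_eq[of E] by blast
      have "disjointed E k \<subseteq> first_hit_partition M E k" unfolding first_hit_partition_def by auto
      then show ?thesis using k by blast
    next
      case False
      then have "\<omega> \<in> first_hit_partition M E 0"
        using \<open>\<omega> \<in> space M\<close> unfolding first_hit_partition_def by simp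
      then show ?thesis by blast
    qed
  qed
qed

lemma L0_partition_first_hit_partition:
  assumes E: "\<And>k. E k \<in> sets M"
  shows "L0_partition M (first_hit_partition M E)"
  unfolding L0_partition_def
proof (intro conjI allI disjoint_family_first_hit_partition UN_first_hit_partition[OF E])
  have rE: "range E \<subseteq> sets M" using E by auto
  have dE: "disjointed E k \<in> sets M" for k
    using sets.range_disjointed_sets[OF rE] by auto
  have UE: "(\<Union>i. E i) \<in> sets M" using sets.countable_UN[OF rE] by simp
  show "first_hit_partition M E k \<in> sets M" for k
    unfolding first_hit_partition_def using dE UE E[of 0] by auto
qed

lemma first_hit_partition_first:
  assumes "\<omega> \<in> first_hit_partition M E k" "\<omega> \<in> (\<Union>i. E i)"
  shows "\<omega> \<in> E k \<and> (\<forall>j<k. \<omega> \<notin> E j)"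
proof -
  have "\<omega> \<in> disjointed E k" using assms first_hit_partition_subset[of M E k] by blast
  then show ?thesis unfolding disjointed_def by auto
qed

lemma L0_stable_saturated: "L0_stable M B \<Longrightarrow> L0_saturated M B"
  unfolding L0_stable_def by simp

lemma L0_stable_nonempty: "L0_stable M B \<Longrightarrow> B \<noteq> {}"
  unfolding L0_stable_def by simp

lemma L0_saturated_measurable: "L0_saturated M B \<Longrightarrow> x \<in> B \<Longrightarrow> x \<in> borel_measurable M"
  unfolding L0_saturated_def L0_def by blast

lemma L0_stable_measurable: "L0_stable M B \<Longrightarrow> x \<in> B \<Longrightarrow> x \<in> borel_measurable M"
  using L0_saturated_measurable[OF L0_stable_saturated] by blast

lemma L0_saturated_AE_eq: "L0_saturated M B \<Longrightarrow> x \<in> B \<Longrightarrow> y \<in> borel_measurable M \<Longrightarrow> (AE \<omega> in M. x \<omega> = y \<omega>) \<Longrightarrow> y \<in> B"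
  unfolding L0_saturated_def L0_def L0_aeq_def by blast

lemma L0_stable_paste: "L0_stable M B \<Longrightarrow> L0_partition M A \<Longrightarrow> (\<And>k. xs k \<in> B) \<Longrightarrow> L0_paste A xs \<in> B"
  unfolding L0_stable_def by blast

lemma L0_stable_paste_first_hit:
  fixes E :: "nat \<Rightarrow> 'a set"
  assumes B: "L0_stable M B" and xs: "\<And>k. xs k \<in> B" and E: "\<And>k. E k \<in> sets M"
  shows "\<exists>z\<in>B. \<forall>\<omega>\<in>space M. (\<exists>k. \<omega> \<in> E k) \<longrightarrow> (\<exists>k. \<omega> \<in> E k \<and> (\<forall>j<k. \<omega> \<notin> E j) \<and> z \<omega> = xs k \<omega>)"
proof -
  have P: "L0_partition M (first_hit_partition M E)" by (rule L0_partition_first_hit_partition[OF E])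
  have zB: "L0_paste (first_hit_partition M E) xs \<in> B" using L0_stable_paste[OF B P xs] .
  have "\<forall>\<omega>\<in>space M. (\<exists>k. \<omega> \<in> E k) \<longrightarrow> (\<exists>k. \<omega> \<in> E k \<and> (\<forall>j<k. \<omega> \<notin> E j) \<and> L0_paste (first_hit_partition M E) xs \<omega> = xs k \<omega>)"
  proof (intro ballI impI)
    fix \<omega> assume \<omega>: "\<omega> \<in> space M" and ex: "\<exists>k. \<omega> \<in> E k"
    obtain k where k: "\<omega> \<in> first_hit_partition M E k" using L0_partition_cover[OF P \<omega>] by (elim exE)
    have "\<omega> \<in> (\<Union>i. E i)" using ex by simp
    from first_hit_partition_first[OF k this] have "\<omega> \<in> E k \<and> (\<forall>j<k. \<omega> \<notin> E j)" .
    moreover have "L0_paste (first_hit_partition M E) xs \<omega> = xs k \<omega>" by (rule L0_paste_eq[OF P k])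
    ultimately show "\<exists>k. \<omega> \<in> E k \<and> (\<forall>j<k. \<omega> \<notin> E j) \<and> L0_paste (first_hit_partition M E) xs \<omega> = xs k \<omega>"
      by (intro exI[of _ k]) simp
  qed
  then show ?thesis using zB by (intro bexI[of _ "L0_paste (first_hit_partition M E) xs"])
qed

lemma L0_stable_paste_AE:
  fixes E :: "nat \<Rightarrow> 'a set"
  assumes B: "L0_stable M B" and xs: "\<And>k. xs k \<in> B" and E: "\<And>k. E k \<in> sets M"
    and cov: "AE \<omega> in M. \<exists>k. \<omega> \<in> E k"
  shows "\<exists>z\<in>B. AE \<omega> in M. \<exists>k. \<omega> \<in> E k \<and> z \<omega> = xs k \<omega>"
proof -
  obtain z where zB: "z \<in> B" and z: "\<forall>\<omega>\<in>space M. (\<exists>k. \<omega> \<in> E k) \<longrightarrow> (\<exists>k. \<omega> \<in> E k \<and> (\<forall>j<k. \<omega> \<notin> E j) \<and> z \<omega> = xs k \<omega>)"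
    using L0_stable_paste_first_hit[where xs=xs and E=E, OF B xs E] by (elim bexE)
  have "AE \<omega> in M. \<exists>k. \<omega> \<in> E k \<and> z \<omega> = xs k \<omega>"
    using cov AE_space
  proof eventually_elim
    case (elim \<omega>)
    then obtain k where "\<omega> \<in> E k \<and> (\<forall>j<k. \<omega> \<notin> E j) \<and> z \<omega> = xs k \<omega>" using z by meson
    then show ?case by (intro exI[of _ k]) simp
  qed
  then show ?thesis using zB by (intro bexI[of _ z])
qed

lemma L0_stable_paste_two:
  assumes B: "L0_stable M B" and x: "x \<in> B" and y: "y \<in> B" and E: "E \<in> sets M"
  shows "\<exists>z\<in>B. \<forall>\<omega>\<in>space M. (\<omega> \<in> E \<longrightarrow> z \<omega> = x \<omega>) \<and> (\<omega> \<notin> E \<longrightarrow> z \<omega> = y \<omega>)"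
proof -
  define E' where "E' k = (if k = 0 then E else space M)" for k :: nat
  define xs where "xs k = (if k = 0 then x else y)" for k :: nat
  have xsB: "xs k \<in> B" for k using x y by (simp add: xs_def)
  have EM: "E' k \<in> sets M" for k using E by (simp add: E'_def)
  obtain z where zB: "z \<in> B" and z: "\<forall>\<omega>\<in>space M. (\<exists>k. \<omega> \<in> E' k) \<longrightarrow> (\<exists>k. \<omega> \<in> E' k \<and> (\<forall>j<k. \<omega> \<notin> E' j) \<and> z \<omega> = xs k \<omega>)"
    using L0_stable_paste_first_hit[where xs=xs and E=E', OF B xsB EM] by (elim bexE)
  have "\<forall>\<omega>\<in>space M. (\<omega> \<in> E \<longrightarrow> z \<omega> = x \<omega>) \<and> (\<omega> \<notin> E \<longrightarrow> z \<omega> = y \<omega>)"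
  proof (intro ballI conjI impI)
    fix \<omega> assume \<omega>: "\<omega> \<in> space M"
    have "\<omega> \<in> E' 1" using \<omega> by (simp add: E'_def)
    then obtain k where k: "\<omega> \<in> E' k" "\<forall>j<k. \<omega> \<notin> E' j" "z \<omega> = xs k \<omega>"
      using z \<omega> by meson
    show "\<omega> \<in> E \<Longrightarrow> z \<omega> = x \<omega>"
    proof -
      assume "\<omega> \<in> E"
      then have "k = 0" using k(2) by (cases k) (auto simp: E'_def)
      then show ?thesis using k(3) by (simp add: xs_def)
    qed
    show "\<omega> \<notin> E \<Longrightarrow> z \<omega> = y \<omega>"
    proof -
      assume "\<omega> \<notin> E"
      then have "k \<noteq> 0" using k(1) by (cases "k = 0") (auto simp: E'_def)
      then show ?thesis using k(3) by (simp add: xs_def)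
    qed
  qed
  then show ?thesis using zB by (intro bexI[of _ z])
qed

lemma L0_stable_meets_L0_ball:
  fixes xs :: "nat \<Rightarrow> 'a \<Rightarrow> 'b::euclidean_space"
  assumes B: "L0_stable M B" and xs: "\<And>k. xs k \<in> B"
    and z[measurable]: "z \<in> borel_measurable M" and \<rho>[measurable]: "\<rho> \<in> borel_measurable M"
    and near: "AE \<omega> in M. \<exists>k. norm (z \<omega> - xs k \<omega>) < \<rho> \<omega>"
  shows "\<exists>y\<in>B. AE \<omega> in M. norm (z \<omega> - y \<omega>) < \<rho> \<omega>"
proof -
  have [measurable]: "xs k \<in> borel_measurable M" for k using L0_stable_measurable[OF B xs] .
  define E where "E k = {\<omega>\<in>space M. norm (z \<omega> - xs k \<omega>) < \<rho> \<omega>}" for k :: nat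
  have E: "E k \<in> sets M" for k unfolding E_def by measurable
  have cover: "AE \<omega> in M. \<exists>k. \<omega> \<in> E k"
    using near AE_space by eventually_elim (simp add: E_def)
  obtain y where "y \<in> B" and y: "AE \<omega> in M. \<exists>k. \<omega> \<in> E k \<and> y \<omega> = xs k \<omega>"
    using L0_stable_paste_AE[where xs=xs and E=E, OF B xs E cover] by (elim bexE)
  moreover from y have "AE \<omega> in M. norm (z \<omega> - y \<omega>) < \<rho> \<omega>"
    by eventually_elim (auto simp: E_def)
  ultimately show ?thesis by blast
qed

section \<open>Essentially maximal elements\<close>

lemma exists_max_measure_countably_directed:
  fixes \<S> :: "'a set set"
  assumes P: "prob_space M" and S: "\<S> \<subseteq> sets M" "\<S> \<noteq> {}"
    and dir: "\<And>E::nat \<Rightarrow> 'a set. range E \<subseteq> \<S> \<Longrightarrow> \<exists>F\<in>\<S>. AE \<omega> in M. \<omega> \<in> (\<Union>i. E i) \<longrightarrow> \<omega> \<in> F"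
  shows "\<exists>F\<in>\<S>. \<forall>E\<in>\<S>. measure M E \<le> measure M F"
proof -
  interpret prob_space M by fact
  define s where "s = Sup (measure M ` \<S>)"
  have bdd: "bdd_above (measure M ` \<S>)"
    by (rule bdd_aboveI[of _ 1]) (auto simp: measure_le_1)
  have le_s: "measure M E \<le> s" if "E \<in> \<S>" for E
    unfolding s_def using bdd that by (intro cSup_upper) auto
  have "\<exists>E\<in>\<S>. s - 1 / Suc n < measure M E" for n
  proof -
    have "s - 1 / Suc n < s" by simp
    then show ?thesis unfolding s_def using S(2) by (subst (asm) less_cSup_iff) (auto simp: bdd)
  qed
  then obtain E where E: "\<And>n. E n \<in> \<S>" "\<And>n. s - 1 / Suc n < measure M (E n)" by metis
  obtain F where F: "F \<in> \<S>" "AE \<omega> in M. \<omega> \<in> (\<Union>i. E i) \<longrightarrow> \<omega> \<in> F"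
    using dir[of E] E(1) by blast
  have EF: "measure M (E n) \<le> measure M F" for n
    using F S(1) by (intro finite_measure_mono_AE) (auto elim!: AE_mp)
  have "s - 1 / Suc n < measure M F" for n using E(2)[of n] EF[of n] by linarith
  then have "s \<le> measure M F"
  proof (rule_tac ccontr)
    assume a: "\<And>n. s - 1 / Suc n < measure M F" and "\<not> s \<le> measure M F"
    then have "0 < s - measure M F" by simp
    then obtain n where n: "inverse (real (Suc n)) < s - measure M F"
      using reals_Archimedean by blast
    show False using a[of n] n by (simp add: inverse_eq_divide)
  qed
  then have "measure M E \<le> measure M F" if "E \<in> \<S>" for E
    using le_s[OF that] by linarith
  with F(1) show ?thesis by blast
qed

lemma exists_AE_maximal_set:
  fixes \<S> :: "'a set set"
  assumes P: "prob_space M" and S: "\<S> \<subseteq> sets M" "\<S> \<noteq> {}"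
    and dir: "\<And>E::nat \<Rightarrow> 'a set. range E \<subseteq> \<S> \<Longrightarrow> \<exists>F\<in>\<S>. AE \<omega> in M. \<omega> \<in> (\<Union>i. E i) \<longrightarrow> \<omega> \<in> F"
  shows "\<exists>F\<in>\<S>. \<forall>E\<in>\<S>. AE \<omega> in M. \<omega> \<in> E \<longrightarrow> \<omega> \<in> F"
proof -
  interpret prob_space M by fact
  obtain F where F: "F \<in> \<S>" and max: "\<And>E. E \<in> \<S> \<Longrightarrow> measure M E \<le> measure M F"
    using exists_max_measure_countably_directed[OF P S dir] by blast
  show ?thesis
  proof (intro bexI[OF _ F] ballI)
    fix E' assume E': "E' \<in> \<S>"
    define G where "G i = (if i = 0 then F else E')" for i :: nat
    obtain F' where F': "F' \<in> \<S>" "AE \<omega> in M. \<omega> \<in> (\<Union>i. G i) \<longrightarrow> \<omega> \<in> F'"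
      using dir[of G] F E' by (auto simp: G_def)
    have U: "(\<Union>i. G i) = F \<union> E'" by (auto simp: G_def split: if_splits)
    have "measure M (F \<union> E') \<le> measure M F'"
      using F' S(1) U by (intro finite_measure_mono_AE) auto
    also have "\<dots> \<le> measure M F" using max[OF F'(1)] .
    finally have "measure M (F \<union> E') \<le> measure M F" .
    moreover have "measure M (F \<union> E') = measure M F + measure M (E' - F)"
      using F E' S(1) by (intro finite_measure_Union') auto
    ultimately have "measure M (E' - F) = 0" using measure_nonneg[of M "E' - F"] by linarith
    then have "E' - F \<in> null_sets M"
      using F E' S(1) by (auto simp: emeasure_eq_measure null_sets_def)
    from AE_not_in[OF this] show "AE \<omega> in M. \<omega> \<in> E' \<longrightarrow> \<omega> \<in> F" by eventually_elim auto
  qed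
qed

lemma L0_stable_AE_maximal_element:
  fixes P :: "'b::euclidean_space \<Rightarrow> 'a \<Rightarrow> bool"
  assumes M: "prob_space M" and B: "L0_stable M B"
    and meas: "\<And>x. x \<in> B \<Longrightarrow> {\<omega>\<in>space M. P (x \<omega>) \<omega>} \<in> sets M"
  shows "\<exists>x0\<in>B. \<forall>x\<in>B. AE \<omega> in M. P (x \<omega>) \<omega> \<longrightarrow> P (x0 \<omega>) \<omega>"
proof -
  define S where "S x = {\<omega>\<in>space M. P (x \<omega>) \<omega>}" for x
  have "\<exists>F\<in>S ` B. \<forall>E\<in>S ` B. AE \<omega> in M. \<omega> \<in> E \<longrightarrow> \<omega> \<in> F"
  proof (rule exists_AE_maximal_set[OF M])
    show "S ` B \<subseteq> sets M" using meas by (auto simp: S_def)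
    show "S ` B \<noteq> {}" using L0_stable_nonempty[OF B] by simp
    fix E :: "nat \<Rightarrow> 'a set" assume "range E \<subseteq> S ` B"
    then have "\<forall>k. \<exists>x\<in>B. E k = S x" by blast
    then obtain xs where xs: "\<And>k. xs k \<in> B" "\<And>k. E k = S (xs k)" by metis
    have Em: "E k \<in> sets M" for k using xs meas by (simp add: S_def)
    obtain z where zB: "z \<in> B" and z: "\<forall>\<omega>\<in>space M. (\<exists>k. \<omega> \<in> E k) \<longrightarrow> (\<exists>k. \<omega> \<in> E k \<and> (\<forall>j<k. \<omega> \<notin> E j) \<and> z \<omega> = xs k \<omega>)"
      using L0_stable_paste_first_hit[where xs=xs and E=E, OF B xs(1) Em] by (elim bexE)
    have "(\<Union>i. E i) \<subseteq> S z"
    proof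
      fix \<omega> assume "\<omega> \<in> (\<Union>i. E i)"
      then obtain i where i: "\<omega> \<in> E i" by blast
      then have \<omega>: "\<omega> \<in> space M" using xs(2)[of i] by (simp add: S_def)
      obtain k where k: "\<omega> \<in> E k" "z \<omega> = xs k \<omega>" using z \<omega> i by meson
      show "\<omega> \<in> S z" using k xs(2)[of k] \<omega> by (simp add: S_def)
    qed
    then show "\<exists>F\<in>S ` B. AE \<omega> in M. \<omega> \<in> (\<Union>i. E i) \<longrightarrow> \<omega> \<in> F"
      using zB by (intro bexI[of _ "S z"]) auto
  qed
  then obtain x0 where x0: "x0 \<in> B" "\<forall>E\<in>S ` B. AE \<omega> in M. \<omega> \<in> E \<longrightarrow> \<omega> \<in> S x0" by blast
  show ?thesis
  proof (intro bexI[OF _ x0(1)] ballI)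
    fix x assume "x \<in> B"
    then have "AE \<omega> in M. \<omega> \<in> S x \<longrightarrow> \<omega> \<in> S x0" using x0(2) by blast
    then show "AE \<omega> in M. P (x \<omega>) \<omega> \<longrightarrow> P (x0 \<omega>) \<omega>"
      using AE_space by eventually_elim (simp add: S_def)
  qed
qed

section \<open>Closed and sequentially closed stable sets\<close>

lemma L0_open_L0_ball:
  assumes "x \<in> L0 M" "L0_pos M r"
  shows "L0_open M (L0_ball M x r)"
  unfolding L0_open_def
proof (intro conjI ballI)
  show "L0_ball M x r \<subseteq> L0 M" unfolding L0_ball_def by blast
  fix y assume "y \<in> L0_ball M x r"
  then show "\<exists>x'\<in>L0 M. \<exists>r'. L0_pos M r' \<and> y \<in> L0_ball M x' r' \<and> L0_ball M x' r' \<subseteq> L0_ball M x r"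
    using assms by blast
qed

lemma L0_ball_centre:
  assumes "x \<in> L0 M" "L0_pos M r"
  shows "x \<in> L0_ball M x r"
proof -
  have "AE \<omega> in M. 0 < r \<omega>" using assms(2) unfolding L0_pos_def by simp
  then have "AE \<omega> in M. norm (x \<omega> - x \<omega>) < r \<omega>" by eventually_elim simp
  then show ?thesis using assms(1) unfolding L0_ball_def by simp
qed

lemma LIMSEQ_dist_less_inverse_Suc:
  fixes w :: "nat \<Rightarrow> 'b::metric_space"
  assumes "\<And>m. dist (w m) c < 1 / Suc m"
  shows "w \<longlonglongrightarrow> c"
proof -
  have "(\<lambda>m. dist (w m) c) \<longlonglongrightarrow> 0"
  proof (rule real_tendsto_sandwich[of "\<lambda>_. 0" _ _ "\<lambda>m. 1 / Suc m"])
    show "\<forall>\<^sub>F n in sequentially. 0 \<le> dist (w n) c" by simp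
    show "\<forall>\<^sub>F n in sequentially. dist (w n) c \<le> 1 / Suc n" using assms by (intro always_eventually allI less_imp_le) blast
    show "(\<lambda>n. 0) \<longlonglongrightarrow> (0::real)" by simp
    show "(\<lambda>n. 1 / real (Suc n)) \<longlonglongrightarrow> 0" using LIMSEQ_inverse_real_of_nat by (simp add: inverse_eq_divide)
  qed
  then show ?thesis using tendsto_dist_iff by blast
qed

lemma LIMSEQ_imp_ex_norm_diff_less:
  fixes X :: "nat \<Rightarrow> 'b::real_normed_vector"
  assumes "X \<longlonglongrightarrow> x" and "norm (z - x) < r"
  shows "\<exists>n. norm (z - X n) < r"
proof -
  have "(\<lambda>n. norm (z - X n)) \<longlonglongrightarrow> norm (z - x)" using assms(1) by (intro tendsto_intros)
  then have "\<forall>\<^sub>F n in sequentially. norm (z - X n) < r" using assms(2) by (rule order_tendstoD(2))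
  then obtain N where "\<forall>n\<ge>N. norm (z - X n) < r" unfolding eventually_sequentially by blast
  then show ?thesis by (meson order_refl)
qed

lemma L0_seq_closed_AE_closure_mem:
  fixes xs :: "nat \<Rightarrow> 'a \<Rightarrow> 'b::euclidean_space"
  assumes B: "L0_stable M B" and sc: "L0_seq_closed M B" and xs: "\<And>i. xs i \<in> B"
    and c[measurable]: "c \<in> borel_measurable M"
    and cl: "AE \<omega> in M. c \<omega> \<in> closure (range (\<lambda>i. xs i \<omega>))"
  shows "c \<in> B"
proof -
  have "\<exists>w\<in>B. AE \<omega> in M. norm (c \<omega> - w \<omega>) < 1 / Suc m" for m
  proof (rule L0_stable_meets_L0_ball[where xs=xs, OF B xs c])
    show "(\<lambda>_. 1 / real (Suc m)) \<in> borel_measurable M" by simp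
    show "AE \<omega> in M. \<exists>i. norm (c \<omega> - xs i \<omega>) < 1 / real (Suc m)"
      using cl
    proof eventually_elim
      case (elim \<omega>)
      have "0 < 1 / real (Suc m)" by simp
      then obtain y where "y \<in> range (\<lambda>i. xs i \<omega>)" "dist y (c \<omega>) < 1 / Suc m"
        using elim closure_approachable by blast
      then show ?case by (auto simp: dist_norm norm_minus_commute)
    qed
  qed
  then obtain w where wB: "\<And>m. w m \<in> B" and w: "\<And>m. AE \<omega> in M. norm (c \<omega> - w m \<omega>) < 1 / Suc m"
    by metis
  have "AE \<omega> in M. \<forall>m. norm (c \<omega> - w m \<omega>) < 1 / Suc m"
    using w by (subst AE_all_countable) blast
  then have "AE \<omega> in M. (\<lambda>m. w m \<omega>) \<longlonglongrightarrow> c \<omega>"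
    by eventually_elim (rule LIMSEQ_dist_less_inverse_Suc, simp add: dist_norm norm_minus_commute)
  then show ?thesis using sc wB c unfolding L0_seq_closed_def L0_def by blast
qed

lemma L0_closed_imp_seq_closed:
  fixes K :: "('a \<Rightarrow> 'b::euclidean_space) set"
  assumes K: "L0_stable M K" and cl: "L0_closed M K"
  shows "L0_seq_closed M K"
  unfolding L0_seq_closed_def
proof (intro allI impI)
  fix xs x assume "(\<forall>n. xs n \<in> K) \<and> x \<in> L0 M \<and> (AE \<omega> in M. (\<lambda>n. xs n \<omega>) \<longlonglongrightarrow> x \<omega>)"
  then have xs: "\<And>n. xs n \<in> K" and x: "x \<in> L0 M"
    and conv: "AE \<omega> in M. (\<lambda>n. xs n \<omega>) \<longlonglongrightarrow> x \<omega>" by auto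
  show "x \<in> K"
  proof (rule ccontr)
    assume "x \<notin> K"
    with x cl obtain z r where z: "z \<in> L0 M" and r: "L0_pos M r" and "x \<in> L0_ball M z r"
      and sub: "L0_ball M z r \<subseteq> L0 M - K"
      unfolding L0_closed_def L0_open_def by blast
    then have "AE \<omega> in M. norm (z \<omega> - x \<omega>) < r \<omega>" unfolding L0_ball_def by blast
    with conv have "AE \<omega> in M. \<exists>n. norm (z \<omega> - xs n \<omega>) < r \<omega>"
      by eventually_elim (rule LIMSEQ_imp_ex_norm_diff_less)
    moreover have "z \<in> borel_measurable M" "r \<in> borel_measurable M"
      using z r unfolding L0_def L0_pos_def by auto
    ultimately obtain y where "y \<in> K" "AE \<omega> in M. norm (z \<omega> - y \<omega>) < r \<omega>"
      using L0_stable_meets_L0_ball[where xs=xs, OF K xs] by blast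
    then have "y \<in> L0_ball M z r" "y \<in> K"
      using L0_stable_measurable[OF K] unfolding L0_ball_def L0_def by auto
    then show False using sub by blast
  qed
qed

lemma L0_seq_closed_best_approximation_fails:
  fixes K :: "('a \<Rightarrow> 'b::euclidean_space) set"
  assumes M: "prob_space M" and K: "L0_stable M K" and sc: "L0_seq_closed M K"
    and y: "y \<in> L0 M" "y \<notin> K"
  obtains x0 n where "x0 \<in> K"
    and "\<And>x. x \<in> K \<Longrightarrow> AE \<omega> in M. norm (y \<omega> - x \<omega>) < 1 / Suc n \<longrightarrow> norm (y \<omega> - x0 \<omega>) < 1 / Suc n"
    and "\<not> (AE \<omega> in M. norm (y \<omega> - x0 \<omega>) < 1 / Suc n)"
proof -
  have ym[measurable]: "y \<in> borel_measurable M" using y unfolding L0_def by blast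
  define P where "P n v \<omega> = (norm (y \<omega> - v) < 1 / Suc n)" for n :: nat and v :: 'b and \<omega>
  have "\<exists>x0\<in>K. \<forall>x\<in>K. AE \<omega> in M. P n (x \<omega>) \<omega> \<longrightarrow> P n (x0 \<omega>) \<omega>" for n
  proof (rule L0_stable_AE_maximal_element[OF M K])
    fix x assume "x \<in> K"
    then have [measurable]: "x \<in> borel_measurable M" using L0_stable_measurable[OF K] by blast
    show "{\<omega> \<in> space M. P n (x \<omega>) \<omega>} \<in> sets M" unfolding P_def by measurable
  qed
  then obtain xs where xsK: "\<And>n. xs n \<in> K"
    and mx: "\<And>n x. x \<in> K \<Longrightarrow> AE \<omega> in M. P n (x \<omega>) \<omega> \<longrightarrow> P n (xs n \<omega>) \<omega>"
    by metis
  have "\<exists>n. \<not> (AE \<omega> in M. P n (xs n \<omega>) \<omega>)"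
  proof (rule ccontr)
    assume "\<not> (\<exists>n. \<not> (AE \<omega> in M. P n (xs n \<omega>) \<omega>))"
    then have "AE \<omega> in M. \<forall>n. P n (xs n \<omega>) \<omega>" by (subst AE_all_countable) blast
    then have "AE \<omega> in M. (\<lambda>n. xs n \<omega>) \<longlonglongrightarrow> y \<omega>"
    proof eventually_elim
      case (elim \<omega>)
      show ?case by (rule LIMSEQ_dist_less_inverse_Suc) (use elim in \<open>simp add: P_def dist_norm norm_minus_commute\<close>)
    qed
    then have "y \<in> K" using sc xsK y unfolding L0_seq_closed_def by blast
    then show False using y by blast
  qed
  then show ?thesis using that[OF xsK] mx unfolding P_def by blast
qed

lemma L0_seq_closed_imp_closed:
  fixes K :: "('a \<Rightarrow> 'b::euclidean_space) set"
  assumes M: "prob_space M" and K: "L0_stable M K" and sc: "L0_seq_closed M K"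
  shows "L0_closed M K"
  unfolding L0_closed_def L0_open_def
proof (intro conjI ballI)
  show "L0 M - K \<subseteq> L0 M" by blast
  fix y assume y: "y \<in> L0 M - K"
  have ym[measurable]: "y \<in> borel_measurable M" using y unfolding L0_def by blast
  obtain x0 n where x0: "x0 \<in> K"
    and best: "\<And>x. x \<in> K \<Longrightarrow> AE \<omega> in M. norm (y \<omega> - x \<omega>) < 1 / Suc n \<longrightarrow> norm (y \<omega> - x0 \<omega>) < 1 / Suc n"
    and fails: "\<not> (AE \<omega> in M. norm (y \<omega> - x0 \<omega>) < 1 / Suc n)"
    using L0_seq_closed_best_approximation_fails[OF M K sc] y by blast
  have [measurable]: "x0 \<in> borel_measurable M" using L0_stable_measurable[OF K x0] .
  define r where "r \<omega> = (if norm (y \<omega> - x0 \<omega>) < 1 / Suc n then 1 else 1 / Suc n)" for \<omega>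
  have r: "L0_pos M r"
    unfolding L0_pos_def
  proof
    show "r \<in> borel_measurable M" unfolding r_def by measurable
    show "AE \<omega> in M. 0 < r \<omega>" by (intro AE_I2) (simp add: r_def)
  qed
  have "L0_ball M y r \<subseteq> L0 M - K"
  proof
    fix w assume w: "w \<in> L0_ball M y r"
    have "w \<notin> K"
    proof
      assume "w \<in> K"
      have "AE \<omega> in M. norm (y \<omega> - w \<omega>) < r \<omega>" using w unfolding L0_ball_def by blast
      then have "AE \<omega> in M. norm (y \<omega> - x0 \<omega>) < 1 / Suc n"
        using best[OF \<open>w \<in> K\<close>]
      proof eventually_elim
        case (elim \<omega>)
        show ?case
        proof (rule ccontr)
          assume "\<not> norm (y \<omega> - x0 \<omega>) < 1 / Suc n"
          then show False using elim by (simp add: r_def)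
        qed
      qed
      then show False using fails by blast
    qed
    then show "w \<in> L0 M - K" using w unfolding L0_ball_def by blast
  qed
  moreover have "y \<in> L0_ball M y r" using L0_ball_centre[OF _ r] y by blast
  ultimately show "\<exists>x\<in>L0 M. \<exists>r. L0_pos M r \<and> y \<in> L0_ball M x r \<and> L0_ball M x r \<subseteq> L0 M - K"
    using r y by blast
qed

section \<open>Consequences of stable compactness\<close>

text \<open>The sets \<open>L0_constrained M K Q r\<close>, with \<open>r\<close> ranging over a family closed under pasting,
  form the base of a stable filter; stable compactness then provides a cluster point near which
  all the constraints can be met.\<close>

definition L0_constrained :: "'a measure \<Rightarrow> ('a \<Rightarrow> 'b) set \<Rightarrow> ('b \<Rightarrow> real \<Rightarrow> 'a \<Rightarrow> bool) \<Rightarrow> ('a \<Rightarrow> real) \<Rightarrow> ('a \<Rightarrow> 'b) set" where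
  "L0_constrained M K Q r = {y \<in> K. AE \<omega> in M. Q (y \<omega>) (r \<omega>) \<omega>}"

lemma L0_constrained_subset: "L0_constrained M K Q r \<subseteq> K" unfolding L0_constrained_def by blast

lemma L0_saturated_constrained:
  assumes K: "L0_saturated M K"
  shows "L0_saturated M (L0_constrained M K Q r)"
  unfolding L0_saturated_def
proof (intro conjI ballI impI)
  show "L0_constrained M K Q r \<subseteq> L0 M" using K unfolding L0_saturated_def L0_constrained_def by blast
  fix f g assume f: "f \<in> L0_constrained M K Q r" and g: "g \<in> L0 M" and fg: "L0_aeq M f g"
  have "g \<in> K" using K f g fg unfolding L0_saturated_def L0_constrained_def by blast
  moreover have "AE \<omega> in M. Q (g \<omega>) (r \<omega>) \<omega>"
  proof -
    have "AE \<omega> in M. Q (f \<omega>) (r \<omega>) \<omega>" using f unfolding L0_constrained_def by blast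
    moreover have "AE \<omega> in M. f \<omega> = g \<omega>" using fg unfolding L0_aeq_def .
    ultimately show ?thesis by eventually_elim simp
  qed
  ultimately show "g \<in> L0_constrained M K Q r" unfolding L0_constrained_def by blast
qed

lemma L0_stable_constrained:
  fixes K :: "('a \<Rightarrow> 'b::euclidean_space) set"
  assumes K: "L0_stable M K" and ne: "L0_constrained M K Q r \<noteq> {}"
  shows "L0_stable M (L0_constrained M K Q r)"
  unfolding L0_stable_def
proof (intro conjI allI impI)
  show "L0_saturated M (L0_constrained M K Q r)" using L0_saturated_constrained[OF L0_stable_saturated[OF K]] .
  show "L0_constrained M K Q r \<noteq> {}" by fact
  fix A :: "nat \<Rightarrow> 'a set" and xs :: "nat \<Rightarrow> 'a \<Rightarrow> 'b"
  assume a: "L0_partition M A \<and> (\<forall>k. xs k \<in> L0_constrained M K Q r)"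
  then have A: "L0_partition M A" and xs: "\<And>k. xs k \<in> L0_constrained M K Q r" by auto
  have "L0_paste A xs \<in> K" using L0_stable_paste[OF K A] xs L0_constrained_subset by blast
  moreover have "AE \<omega> in M. Q (L0_paste A xs \<omega>) (r \<omega>) \<omega>"
  proof -
    have "AE \<omega> in M. \<forall>k. Q (xs k \<omega>) (r \<omega>) \<omega>"
      using xs unfolding L0_constrained_def by (subst AE_all_countable) blast
    then show ?thesis using AE_space
    proof eventually_elim
      case (elim \<omega>)
      obtain k where k: "\<omega> \<in> A k" using L0_partition_cover[OF A elim(2)] by blast
      show ?case using elim(1) L0_paste_eq[OF A k, of xs] by simp
    qed
  qed
  ultimately show "L0_paste A xs \<in> L0_constrained M K Q r" unfolding L0_constrained_def by blast
qed

lemma L0_paste_set_constrained_subset: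
  fixes K :: "('a \<Rightarrow> 'b::euclidean_space) set"
  assumes K: "L0_stable M K" and A: "L0_partition M A"
  shows "L0_paste_set M A (\<lambda>k. L0_constrained M K Q (rs k)) \<subseteq> L0_constrained M K Q (L0_paste A rs)"
proof
  fix y assume "y \<in> L0_paste_set M A (\<lambda>k. L0_constrained M K Q (rs k))"
  then obtain xs where y: "y \<in> L0 M" and xs: "\<And>k. xs k \<in> L0_constrained M K Q (rs k)" and yx: "L0_aeq M y (L0_paste A xs)"
    unfolding L0_paste_set_def by blast
  have pK: "L0_paste A xs \<in> K" using L0_stable_paste[OF K A] xs L0_constrained_subset by blast
  have yK: "y \<in> K"
    using L0_saturated_AE_eq[OF L0_stable_saturated[OF K] pK] y yx unfolding L0_def L0_aeq_def
    by (simp add: eq_commute)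
  have "AE \<omega> in M. \<forall>k. Q (xs k \<omega>) (rs k \<omega>) \<omega>"
    using xs unfolding L0_constrained_def by (subst AE_all_countable) blast
  moreover have "AE \<omega> in M. y \<omega> = L0_paste A xs \<omega>" using yx unfolding L0_aeq_def .
  ultimately have "AE \<omega> in M. Q (y \<omega>) (L0_paste A rs \<omega>) \<omega>" using AE_space
  proof eventually_elim
    case (elim \<omega>)
    obtain k where k: "\<omega> \<in> A k" using L0_partition_cover[OF A elim(3)] by blast
    show ?case using elim(1,2) L0_paste_eq[OF A k, of xs] L0_paste_eq[OF A k, of rs] by simp
  qed
  then show "y \<in> L0_constrained M K Q (L0_paste A rs)" using yK unfolding L0_constrained_def by blast
qed

lemma L0_constrained_subset_paste_set:
  fixes K :: "('a \<Rightarrow> 'b::euclidean_space) set"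
  assumes K: "L0_stable M K" and A: "L0_partition M A" and ne: "\<And>k. L0_constrained M K Q (rs k) \<noteq> {}"
  shows "L0_constrained M K Q (L0_paste A rs) \<subseteq> L0_paste_set M A (\<lambda>k. L0_constrained M K Q (rs k))"
proof
  fix y assume y: "y \<in> L0_constrained M K Q (L0_paste A rs)"
  have yK: "y \<in> K" using y L0_constrained_subset by blast
  have "\<forall>k. \<exists>x. x \<in> L0_constrained M K Q (rs k)" using ne by blast
  then obtain w where w: "\<And>k. w k \<in> L0_constrained M K Q (rs k)" by metis
  have "\<exists>z\<in>K. \<forall>\<omega>\<in>space M. (\<omega> \<in> A k \<longrightarrow> z \<omega> = y \<omega>) \<and> (\<omega> \<notin> A k \<longrightarrow> z \<omega> = w k \<omega>)" for k
    using L0_stable_paste_two[OF K yK _ L0_partition_sets[OF A]] w L0_constrained_subset by blast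
  then obtain xs where xsK: "\<And>k. xs k \<in> K"
    and xs: "\<And>k. \<forall>\<omega>\<in>space M. (\<omega> \<in> A k \<longrightarrow> xs k \<omega> = y \<omega>) \<and> (\<omega> \<notin> A k \<longrightarrow> xs k \<omega> = w k \<omega>)"
    by metis
  have xsB: "xs k \<in> L0_constrained M K Q (rs k)" for k
  proof -
    have "AE \<omega> in M. Q (y \<omega>) (L0_paste A rs \<omega>) \<omega>" using y unfolding L0_constrained_def by blast
    moreover have "AE \<omega> in M. Q (w k \<omega>) (rs k \<omega>) \<omega>" using w[of k] unfolding L0_constrained_def by blast
    ultimately have "AE \<omega> in M. Q (xs k \<omega>) (rs k \<omega>) \<omega>" using AE_space
    proof eventually_elim
      case (elim \<omega>)
      show ?case
      proof (cases "\<omega> \<in> A k")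
        case True
        then show ?thesis using elim xs[of k] L0_paste_eq[OF A True, of rs] by simp
      next
        case False
        then show ?thesis using elim xs[of k] by simp
      qed
    qed
    then show ?thesis using xsK unfolding L0_constrained_def by blast
  qed
  have "\<forall>\<omega>\<in>space M. y \<omega> = L0_paste A xs \<omega>"
  proof
    fix \<omega> assume \<omega>: "\<omega> \<in> space M"
    obtain k where k: "\<omega> \<in> A k" using L0_partition_cover[OF A \<omega>] by blast
    show "y \<omega> = L0_paste A xs \<omega>" using L0_paste_eq[OF A k, of xs] xs[of k] \<omega> k by simp
  qed
  then have "L0_aeq M y (L0_paste A xs)" unfolding L0_aeq_def by (intro AE_I2) simp
  moreover have "y \<in> L0 M" using L0_stable_measurable[OF K yK] unfolding L0_def .
  ultimately show "y \<in> L0_paste_set M A (\<lambda>k. L0_constrained M K Q (rs k))"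
    unfolding L0_paste_set_def using xsB by blast
qed

lemma L0_paste_set_constrained:
  fixes K :: "('a \<Rightarrow> 'b::euclidean_space) set"
  assumes "L0_stable M K" "L0_partition M A" "\<And>k. L0_constrained M K Q (rs k) \<noteq> {}"
  shows "L0_paste_set M A (\<lambda>k. L0_constrained M K Q (rs k)) = L0_constrained M K Q (L0_paste A rs)"
  by (rule equalityI[OF L0_paste_set_constrained_subset[OF assms(1,2)]
        L0_constrained_subset_paste_set[OF assms]])

definition L0_constraint_filter :: "'a measure \<Rightarrow> ('a \<Rightarrow> 'b::euclidean_space) set \<Rightarrow> ('b \<Rightarrow> real \<Rightarrow> 'a \<Rightarrow> bool) \<Rightarrow> ('a \<Rightarrow> real) set \<Rightarrow> ('a \<Rightarrow> 'b) set set" where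
  "L0_constraint_filter M K Q R = {G. G \<subseteq> K \<and> L0_saturated M G \<and> (\<exists>r\<in>R. L0_constrained M K Q r \<subseteq> G)}"

lemma L0_filter_constraint_filter:
  fixes K :: "('a \<Rightarrow> 'b::euclidean_space) set"
  assumes Ksat: "L0_saturated M K" and Rne: "R \<noteq> {}" and ne: "\<And>r. r \<in> R \<Longrightarrow> L0_constrained M K Q r \<noteq> {}"
    and Rint: "\<And>r s. r \<in> R \<Longrightarrow> s \<in> R \<Longrightarrow> \<exists>t\<in>R. L0_constrained M K Q t \<subseteq> L0_constrained M K Q r \<inter> L0_constrained M K Q s"
  shows "L0_filter M K (L0_constraint_filter M K Q R)"
  unfolding L0_filter_def
proof (intro conjI ballI allI impI)
  show "F \<subseteq> K" if "F \<in> L0_constraint_filter M K Q R" for F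
    using that unfolding L0_constraint_filter_def by blast
  show "L0_saturated M F" if "F \<in> L0_constraint_filter M K Q R" for F
    using that unfolding L0_constraint_filter_def by blast
  show "K \<in> L0_constraint_filter M K Q R"
    using Rne Ksat L0_constrained_subset unfolding L0_constraint_filter_def by blast
  show "{} \<notin> L0_constraint_filter M K Q R" using ne unfolding L0_constraint_filter_def by blast
  show "G \<in> L0_constraint_filter M K Q R"
    if "F \<in> L0_constraint_filter M K Q R" "G \<subseteq> K \<and> L0_saturated M G \<and> F \<subseteq> G" for F G
    using that unfolding L0_constraint_filter_def by blast
  fix F G assume F: "F \<in> L0_constraint_filter M K Q R" and G: "G \<in> L0_constraint_filter M K Q R"
  obtain r where r: "r \<in> R" "L0_constrained M K Q r \<subseteq> F"
    using F unfolding L0_constraint_filter_def by blast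
  obtain s where s: "s \<in> R" "L0_constrained M K Q s \<subseteq> G"
    using G unfolding L0_constraint_filter_def by blast
  obtain t where t: "t \<in> R" "L0_constrained M K Q t \<subseteq> L0_constrained M K Q r \<inter> L0_constrained M K Q s"
    using Rint[OF r(1) s(1)] by blast
  have "L0_saturated M (F \<inter> G)"
    using F G unfolding L0_constraint_filter_def L0_saturated_def by blast
  then show "F \<inter> G \<in> L0_constraint_filter M K Q R"
    using F G t r s unfolding L0_constraint_filter_def by blast
qed

lemma L0_stable_filter_constraint_filter:
  fixes K :: "('a \<Rightarrow> 'b::euclidean_space) set"
  assumes K: "L0_stable M K" and Rne: "R \<noteq> {}" and ne: "\<And>r. r \<in> R \<Longrightarrow> L0_constrained M K Q r \<noteq> {}"
    and Rp: "\<And>A rs. L0_partition M A \<Longrightarrow> (\<And>k. rs k \<in> R) \<Longrightarrow> L0_paste A rs \<in> R"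
    and Rint: "\<And>r s. r \<in> R \<Longrightarrow> s \<in> R \<Longrightarrow> \<exists>t\<in>R. L0_constrained M K Q t \<subseteq> L0_constrained M K Q r \<inter> L0_constrained M K Q s"
  shows "L0_stable_filter M K (L0_constraint_filter M K Q R)"
  unfolding L0_stable_filter_def
proof (intro conjI)
  have Ksat: "L0_saturated M K" using L0_stable_saturated[OF K] .
  show "L0_filter M K (L0_constraint_filter M K Q R)"
    using L0_filter_constraint_filter[OF Ksat Rne ne Rint] by blast
  show "\<exists>\<B>\<subseteq>L0_constraint_filter M K Q R. (\<forall>F\<in>L0_constraint_filter M K Q R. \<exists>B\<in>\<B>. B \<subseteq> F) \<and> (\<forall>B\<in>\<B>. L0_stable M B) \<and>
        (\<forall>A Ys. L0_partition M A \<and> (\<forall>k. Ys k \<in> \<B>) \<longrightarrow> L0_paste_set M A Ys \<in> \<B>)"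
  proof (intro exI[of _ "L0_constrained M K Q ` R"] conjI ballI allI impI)
    show "L0_constrained M K Q ` R \<subseteq> L0_constraint_filter M K Q R"
      using L0_saturated_constrained[OF Ksat] L0_constrained_subset unfolding L0_constraint_filter_def by blast
    show "\<exists>B\<in>L0_constrained M K Q ` R. B \<subseteq> F" if "F \<in> L0_constraint_filter M K Q R" for F
      using that unfolding L0_constraint_filter_def by blast
    show "L0_stable M B" if "B \<in> L0_constrained M K Q ` R" for B
      using that L0_stable_constrained[OF K] ne by blast
    fix A :: "nat \<Rightarrow> 'a set" and Ys :: "nat \<Rightarrow> ('a \<Rightarrow> 'b) set"
    assume a: "L0_partition M A \<and> (\<forall>k. Ys k \<in> L0_constrained M K Q ` R)"
    then have A: "L0_partition M A" and "\<forall>k. \<exists>r\<in>R. Ys k = L0_constrained M K Q r" by auto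
    then obtain rs where rs: "\<And>k. rs k \<in> R" "\<And>k. Ys k = L0_constrained M K Q (rs k)" by metis
    have "Ys = (\<lambda>k. L0_constrained M K Q (rs k))" using rs(2) by (intro ext) simp
    then have "L0_paste_set M A Ys = L0_constrained M K Q (L0_paste A rs)"
      using L0_paste_set_constrained[where rs=rs, OF K A] ne rs(1) by simp
    then show "L0_paste_set M A Ys \<in> L0_constrained M K Q ` R" using Rp[OF A rs(1)] by simp
  qed
qed

lemma L0_stable_compact_constraint_cluster:
  fixes K :: "('a \<Rightarrow> 'b::euclidean_space) set"
  assumes C: "L0_stable_compact M K" and Rne: "R \<noteq> {}" and ne: "\<And>r. r \<in> R \<Longrightarrow> L0_constrained M K Q r \<noteq> {}"
    and Rp: "\<And>A rs. L0_partition M A \<Longrightarrow> (\<And>k. rs k \<in> R) \<Longrightarrow> L0_paste A rs \<in> R"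
    and Rint: "\<And>r s. r \<in> R \<Longrightarrow> s \<in> R \<Longrightarrow> \<exists>t\<in>R. L0_constrained M K Q t \<subseteq> L0_constrained M K Q r \<inter> L0_constrained M K Q s"
  shows "\<exists>c\<in>K. \<forall>r\<in>R. \<forall>\<rho>. L0_pos M \<rho> \<longrightarrow> L0_constrained M K Q r \<inter> L0_ball M c \<rho> \<noteq> {}"
proof -
  have K: "L0_stable M K" using C unfolding L0_stable_compact_def by blast
  have "L0_stable_filter M K (L0_constraint_filter M K Q R)" using L0_stable_filter_constraint_filter[OF K Rne ne Rp Rint] by blast
  then obtain c where c: "c \<in> K" "L0_cluster M (L0_constraint_filter M K Q R) c"
    using C unfolding L0_stable_compact_def by blast
  have Ksat: "L0_saturated M K" using L0_stable_saturated[OF K] .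
  show ?thesis
  proof (intro bexI[OF _ c(1)] ballI allI impI)
    fix r \<rho> assume r: "r \<in> R" and \<rho>: "L0_pos M \<rho>"
    have cL: "c \<in> L0 M" using c(2) unfolding L0_cluster_def by blast
    have "L0_constrained M K Q r \<in> L0_constraint_filter M K Q R"
      using r L0_saturated_constrained[OF Ksat] L0_constrained_subset unfolding L0_constraint_filter_def by blast
    then show "L0_constrained M K Q r \<inter> L0_ball M c \<rho> \<noteq> {}"
      using c(2) L0_open_L0_ball[OF cL \<rho>] L0_ball_centre[OF cL \<rho>] unfolding L0_cluster_def by blast
  qed
qed

lemma AE_eq_if_L0_balls_meet:
  fixes c x :: "'a \<Rightarrow> 'b::euclidean_space"
  assumes [measurable]: "c \<in> borel_measurable M" "x \<in> borel_measurable M"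
    and meet: "\<And>r. L0_pos M r \<Longrightarrow>
      \<exists>y. (AE \<omega> in M. norm (y \<omega> - x \<omega>) \<le> r \<omega>) \<and> (AE \<omega> in M. norm (c \<omega> - y \<omega>) < r \<omega>)"
  shows "AE \<omega> in M. c \<omega> = x \<omega>"
proof -
  define r where "r \<omega> = (if 0 < norm (c \<omega> - x \<omega>) then norm (c \<omega> - x \<omega>) / 3 else 1)" for \<omega>
  have "L0_pos M r"
    unfolding L0_pos_def
  proof
    show "r \<in> borel_measurable M" unfolding r_def by measurable
    show "AE \<omega> in M. 0 < r \<omega>" by (intro AE_I2) (simp add: r_def)
  qed
  then obtain y where "AE \<omega> in M. norm (y \<omega> - x \<omega>) \<le> r \<omega>" "AE \<omega> in M. norm (c \<omega> - y \<omega>) < r \<omega>"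
    using meet by blast
  then show ?thesis
  proof eventually_elim
    case (elim \<omega>)
    show ?case
    proof (rule ccontr)
      assume "c \<omega> \<noteq> x \<omega>"
      then have pos: "0 < norm (c \<omega> - x \<omega>)" by simp
      have "norm (c \<omega> - x \<omega>) \<le> norm (c \<omega> - y \<omega>) + norm (y \<omega> - x \<omega>)"
        using norm_triangle_ineq[of "c \<omega> - y \<omega>" "y \<omega> - x \<omega>"] by simp
      then show False using elim pos by (simp add: r_def) (smt (verit) norm_ge_zero)
    qed
  qed
qed

lemma L0_stable_AE_limit_near:
  fixes xs :: "nat \<Rightarrow> 'a \<Rightarrow> 'b::euclidean_space"
  assumes K: "L0_stable M K" and xs: "\<And>n. xs n \<in> K" and x: "x \<in> borel_measurable M"
    and conv: "AE \<omega> in M. (\<lambda>n. xs n \<omega>) \<longlonglongrightarrow> x \<omega>" and r: "L0_pos M r"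
  shows "\<exists>y\<in>K. AE \<omega> in M. norm (x \<omega> - y \<omega>) < r \<omega>"
proof -
  have r0: "AE \<omega> in M. 0 < r \<omega>" and rm: "r \<in> borel_measurable M" using r unfolding L0_pos_def by auto
  from conv r0 have "AE \<omega> in M. \<exists>n. norm (x \<omega> - xs n \<omega>) < r \<omega>"
    by eventually_elim (rule LIMSEQ_imp_ex_norm_diff_less, auto)
  then show ?thesis using L0_stable_meets_L0_ball[where xs=xs, OF K xs x rm] by blast
qed

lemma L0_stable_compact_imp_seq_closed:
  fixes K :: "('a \<Rightarrow> 'b::euclidean_space) set"
  assumes C: "L0_stable_compact M K"
  shows "L0_seq_closed M K"
  unfolding L0_seq_closed_def
proof (intro allI impI)
  have K: "L0_stable M K" using C unfolding L0_stable_compact_def by blast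
  fix xs x assume "(\<forall>n. xs n \<in> K) \<and> x \<in> L0 M \<and> (AE \<omega> in M. (\<lambda>n. xs n \<omega>) \<longlonglongrightarrow> x \<omega>)"
  then have xs: "\<And>n. xs n \<in> K" and xm[measurable]: "x \<in> borel_measurable M"
    and conv: "AE \<omega> in M. (\<lambda>n. xs n \<omega>) \<longlonglongrightarrow> x \<omega>" unfolding L0_def by auto
  define Q where "Q v t \<omega> = (norm (v - x \<omega>) \<le> t)" for v :: 'b and t :: real and \<omega>
  define R where "R = {r. L0_pos M r}"
  have "\<exists>c\<in>K. \<forall>r\<in>R. \<forall>\<rho>. L0_pos M \<rho> \<longrightarrow> L0_constrained M K Q r \<inter> L0_ball M c \<rho> \<noteq> {}"
  proof (rule L0_stable_compact_constraint_cluster[OF C])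
    have "(\<lambda>_. 1::real) \<in> R" unfolding R_def L0_pos_def by simp
    then show "R \<noteq> {}" by blast
  next
    fix r assume "r \<in> R"
    then obtain y where "y \<in> K" "AE \<omega> in M. norm (x \<omega> - y \<omega>) < r \<omega>"
      using L0_stable_AE_limit_near[OF K xs xm conv] unfolding R_def by blast
    then show "L0_constrained M K Q r \<noteq> {}"
      unfolding L0_constrained_def Q_def by (auto elim!: AE_mp simp: norm_minus_commute)
  next
    fix A :: "nat \<Rightarrow> 'a set" and rs :: "nat \<Rightarrow> 'a \<Rightarrow> real" assume "L0_partition M A" "\<And>k. rs k \<in> R"
    then show "L0_paste A rs \<in> R" using L0_pos_paste unfolding R_def by blast
  next
    fix r s assume r: "r \<in> R" and s: "s \<in> R"
    define t where "t \<omega> = min (r \<omega>) (s \<omega>)" for \<omega>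
    have "L0_pos M t"
      using r s unfolding R_def L0_pos_def t_def by (auto elim!: AE_mp)
    moreover have "L0_constrained M K Q t \<subseteq> L0_constrained M K Q r \<inter> L0_constrained M K Q s"
      unfolding L0_constrained_def Q_def t_def by (auto elim!: AE_mp)
    ultimately show "\<exists>t\<in>R. L0_constrained M K Q t \<subseteq> L0_constrained M K Q r \<inter> L0_constrained M K Q s"
      unfolding R_def by blast
  qed
  then obtain c where cK: "c \<in> K"
    and c: "\<And>r \<rho>. r \<in> R \<Longrightarrow> L0_pos M \<rho> \<Longrightarrow> L0_constrained M K Q r \<inter> L0_ball M c \<rho> \<noteq> {}"
    by blast
  have "AE \<omega> in M. c \<omega> = x \<omega>"
  proof (rule AE_eq_if_L0_balls_meet)
    show "c \<in> borel_measurable M" using L0_stable_measurable[OF K cK] .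
    fix r assume "L0_pos M r"
    then obtain y where "y \<in> L0_constrained M K Q r" "y \<in> L0_ball M c r"
      using c[of r r] unfolding R_def by blast
    then show "\<exists>y. (AE \<omega> in M. norm (y \<omega> - x \<omega>) \<le> r \<omega>) \<and> (AE \<omega> in M. norm (c \<omega> - y \<omega>) < r \<omega>)"
      unfolding L0_constrained_def L0_ball_def Q_def by blast
  qed simp
  then show "x \<in> K" using L0_saturated_AE_eq[OF L0_stable_saturated[OF K] cK xm] by blast
qed

lemma L0_stable_paste_above:
  fixes ys :: "nat \<Rightarrow> 'a \<Rightarrow> 'b::euclidean_space"
  assumes K: "L0_stable M K" and ys: "\<And>n. ys n \<in> K" and r[measurable]: "r \<in> borel_measurable M"
  shows "\<exists>z\<in>K. \<forall>\<omega>\<in>space M. \<exists>n. r \<omega> < real n \<and> z \<omega> = ys n \<omega>"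
proof -
  define F where "F n = {\<omega>\<in>space M. r \<omega> < real n}" for n
  have F: "F n \<in> sets M" for n unfolding F_def by measurable
  obtain z where "z \<in> K" and z: "\<forall>\<omega>\<in>space M. (\<exists>n. \<omega> \<in> F n) \<longrightarrow>
      (\<exists>n. \<omega> \<in> F n \<and> (\<forall>j<n. \<omega> \<notin> F j) \<and> z \<omega> = ys n \<omega>)"
    using L0_stable_paste_first_hit[where xs=ys and E=F, OF K ys F] by (elim bexE)
  moreover have "\<exists>n. r \<omega> < real n \<and> z \<omega> = ys n \<omega>" if \<omega>: "\<omega> \<in> space M" for \<omega>
  proof -
    have "\<exists>n. \<omega> \<in> F n" using reals_Archimedean2[of "r \<omega>"] \<omega> unfolding F_def by blast
    then obtain n where "\<omega> \<in> F n" "z \<omega> = ys n \<omega>" using z \<omega> by meson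
    then show ?thesis unfolding F_def by blast
  qed
  ultimately show ?thesis by blast
qed

text \<open>The sets \<open>{y \<in> K. r \<le> norm y on A}\<close> form a stable filter; near its cluster point
  \<open>c\<close> no element can exceed \<open>norm c + 1\<close> on \<open>A\<close>.\<close>

lemma L0_stable_compact_unbounded_null:
  fixes K :: "('a \<Rightarrow> 'b::euclidean_space) set"
  assumes C: "L0_stable_compact M K"
    and unbounded: "\<And>r. r \<in> borel_measurable M \<Longrightarrow> \<exists>y\<in>K. AE \<omega> in M. \<omega> \<in> A \<longrightarrow> r \<omega> \<le> norm (y \<omega>)"
  shows "AE \<omega> in M. \<omega> \<notin> A"
proof -
  have K: "L0_stable M K" using C unfolding L0_stable_compact_def by blast
  define Q where "Q v t \<omega> = (\<omega> \<in> A \<longrightarrow> t \<le> norm (v::'b))" for v t \<omega>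
  define R where "R = (borel_measurable M :: ('a \<Rightarrow> real) set)"
  have "\<exists>c\<in>K. \<forall>r\<in>R. \<forall>\<rho>. L0_pos M \<rho> \<longrightarrow> L0_constrained M K Q r \<inter> L0_ball M c \<rho> \<noteq> {}"
  proof (rule L0_stable_compact_constraint_cluster[OF C])
    have "(\<lambda>_. 1::real) \<in> R" unfolding R_def by simp
    then show "R \<noteq> {}" by blast
  next
    fix r assume "r \<in> R"
    then show "L0_constrained M K Q r \<noteq> {}"
      using unbounded unfolding R_def L0_constrained_def Q_def by blast
  next
    fix A' :: "nat \<Rightarrow> 'a set" and rs :: "nat \<Rightarrow> 'a \<Rightarrow> real" assume "L0_partition M A'" "\<And>k. rs k \<in> R"
    then show "L0_paste A' rs \<in> R" using borel_measurable_L0_paste unfolding R_def by blast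
  next
    fix r s assume r: "r \<in> R" and s: "s \<in> R"
    define t where "t \<omega> = max (r \<omega>) (s \<omega>)" for \<omega>
    have "t \<in> R" using r s unfolding R_def t_def by measurable
    moreover have "L0_constrained M K Q t \<subseteq> L0_constrained M K Q r \<inter> L0_constrained M K Q s"
      unfolding L0_constrained_def Q_def t_def by (auto elim!: AE_mp)
    ultimately show "\<exists>t\<in>R. L0_constrained M K Q t \<subseteq> L0_constrained M K Q r \<inter> L0_constrained M K Q s"
      by blast
  qed
  then obtain c where cK: "c \<in> K"
    and c: "\<And>r \<rho>. r \<in> R \<Longrightarrow> L0_pos M \<rho> \<Longrightarrow> L0_constrained M K Q r \<inter> L0_ball M c \<rho> \<noteq> {}"
    by blast
  have [measurable]: "c \<in> borel_measurable M" using L0_stable_measurable[OF K cK] .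
  have "(\<lambda>\<omega>. norm (c \<omega>) + 1) \<in> R" unfolding R_def by measurable
  moreover have "L0_pos M (\<lambda>_. 1)" unfolding L0_pos_def by simp
  ultimately obtain y where "y \<in> L0_constrained M K Q (\<lambda>\<omega>. norm (c \<omega>) + 1)" "y \<in> L0_ball M c (\<lambda>_. 1)"
    using c by blast
  then have "AE \<omega> in M. Q (y \<omega>) (norm (c \<omega>) + 1) \<omega>" "AE \<omega> in M. norm (c \<omega> - y \<omega>) < 1"
    unfolding L0_constrained_def L0_ball_def by auto
  then show ?thesis
  proof eventually_elim
    case (elim \<omega>)
    show ?case
    proof
      assume "\<omega> \<in> A"
      then have "norm (c \<omega>) + 1 \<le> norm (y \<omega>)" using elim(1) unfolding Q_def by blast
      moreover have "norm (y \<omega>) \<le> norm (c \<omega>) + norm (c \<omega> - y \<omega>)"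
        using norm_triangle_ineq[of "c \<omega>" "y \<omega> - c \<omega>"] by (simp add: norm_minus_commute)
      ultimately show False using elim(2) by simp
    qed
  qed
qed

lemma L0_bounded_if_AE_cover:
  assumes G: "\<And>n. G n \<in> sets M" and cover: "AE \<omega> in M. \<exists>n. \<omega> \<in> G n"
    and bound: "\<And>x. x \<in> K \<Longrightarrow> AE \<omega> in M. \<forall>n. \<omega> \<in> G n \<longrightarrow> norm (x \<omega>) < real n"
  shows "L0_bounded M K"
proof -
  have P: "L0_partition M (first_hit_partition M G)" using L0_partition_first_hit_partition[OF G] .
  define b :: "'a \<Rightarrow> real" where "b = L0_paste (first_hit_partition M G) (\<lambda>n _. real n)"
  have "b \<in> borel_measurable M" unfolding b_def by (rule borel_measurable_L0_paste[OF P]) simp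
  moreover have "AE \<omega> in M. norm (x \<omega>) \<le> b \<omega>" if "x \<in> K" for x
    using bound[OF that] cover AE_space
  proof eventually_elim
    case (elim \<omega>)
    obtain k where k: "\<omega> \<in> first_hit_partition M G k" using L0_partition_cover[OF P elim(3)] by blast
    have "\<omega> \<in> G k" using first_hit_partition_first[OF k] elim(2) by blast
    then have "norm (x \<omega>) < real k" using elim(1) by blast
    moreover have "b \<omega> = real k" unfolding b_def using L0_paste_eq[OF P k, of "\<lambda>n _. real n"] by simp
    ultimately show ?case by simp
  qed
  ultimately show ?thesis unfolding L0_bounded_def by blast
qed

lemma L0_stable_compact_imp_bounded:
  fixes K :: "('a \<Rightarrow> 'b::euclidean_space) set"
  assumes M: "prob_space M" and C: "L0_stable_compact M K"
  shows "L0_bounded M K"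
proof -
  have K: "L0_stable M K" using C unfolding L0_stable_compact_def by blast
  have "\<exists>x0\<in>K. \<forall>x\<in>K. AE \<omega> in M. real n \<le> norm (x \<omega>) \<longrightarrow> real n \<le> norm (x0 \<omega>)" for n
  proof (rule L0_stable_AE_maximal_element[OF M K, where P="\<lambda>v \<omega>. real n \<le> norm v"])
    fix x assume "x \<in> K"
    then have [measurable]: "x \<in> borel_measurable M" using L0_stable_measurable[OF K] by blast
    show "{\<omega> \<in> space M. real n \<le> norm (x \<omega>)} \<in> sets M" by measurable
  qed
  then obtain ys where ysK: "\<And>n. ys n \<in> K"
    and max: "\<And>n x. x \<in> K \<Longrightarrow> AE \<omega> in M. real n \<le> norm (x \<omega>) \<longrightarrow> real n \<le> norm (ys n \<omega>)"
    by metis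
  have [measurable]: "ys n \<in> borel_measurable M" for n using L0_stable_measurable[OF K ysK] .
  define G where "G n = {\<omega>\<in>space M. norm (ys n \<omega>) < real n}" for n
  have "AE \<omega> in M. \<omega> \<notin> (\<Inter>n. space M - G n)"
  proof (rule L0_stable_compact_unbounded_null[OF C])
    fix r :: "'a \<Rightarrow> real" assume "r \<in> borel_measurable M"
    then obtain z where "z \<in> K" and z: "\<forall>\<omega>\<in>space M. \<exists>n. r \<omega> < real n \<and> z \<omega> = ys n \<omega>"
      using L0_stable_paste_above[where ys=ys, OF K ysK] by blast
    moreover have "r \<omega> \<le> norm (z \<omega>)" if \<omega>: "\<omega> \<in> (\<Inter>n. space M - G n)" for \<omega>
    proof -
      have "\<omega> \<in> space M" using \<omega> by blast
      then obtain n where "r \<omega> < real n" "z \<omega> = ys n \<omega>" using z by blast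
      moreover have "\<not> norm (ys n \<omega>) < real n" using \<omega> unfolding G_def by blast
      ultimately show ?thesis by simp
    qed
    ultimately show "\<exists>y\<in>K. AE \<omega> in M. \<omega> \<in> (\<Inter>n. space M - G n) \<longrightarrow> r \<omega> \<le> norm (y \<omega>)"
      by (intro bexI[of _ z] AE_I2) auto
  qed
  then have "AE \<omega> in M. \<exists>n. \<omega> \<in> G n" using AE_space by eventually_elim blast
  moreover have "AE \<omega> in M. \<forall>n. \<omega> \<in> G n \<longrightarrow> norm (x \<omega>) < real n" if "x \<in> K" for x
  proof -
    have "AE \<omega> in M. \<forall>n. real n \<le> norm (x \<omega>) \<longrightarrow> real n \<le> norm (ys n \<omega>)"
      using max[OF that] by (subst AE_all_countable) blast
    then show ?thesis
    proof eventually_elim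
      case (elim \<omega>)
      show ?case
      proof (intro allI impI)
        fix n assume "\<omega> \<in> G n"
        then have "norm (ys n \<omega>) < real n" unfolding G_def by blast
        then show "norm (x \<omega>) < real n" using elim[rule_format, of n] by linarith
      qed
    qed
  qed
  moreover have "G n \<in> sets M" for n unfolding G_def by measurable
  ultimately show ?thesis using L0_bounded_if_AE_cover by blast
qed

section \<open>Measurable selections\<close>

lemma exists_countable_ball_basis:
  "\<exists>cr :: nat \<Rightarrow> 'b::euclidean_space \<times> real. \<forall>v \<epsilon>. 0 < \<epsilon> \<longrightarrow>
     (\<exists>i. v \<in> ball (fst (cr i)) (snd (cr i)) \<and> cball (fst (cr i)) (snd (cr i)) \<subseteq> ball v \<epsilon>)"
proof -
  obtain D :: "'b set" where D: "countable D" "\<And>X. open X \<Longrightarrow> X \<noteq> {} \<Longrightarrow> \<exists>d\<in>D. d \<in> X"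
    using countable_dense_setE by blast
  define cen where "cen i = from_nat_into D (fst (prod_decode i))" for i
  define rad where "rad i = 1 / real (Suc (snd (prod_decode i)))" for i
  have "\<exists>i. v \<in> ball (cen i) (rad i) \<and> cball (cen i) (rad i) \<subseteq> ball v \<epsilon>" if e: "0 < \<epsilon>" for v :: 'b and \<epsilon>
  proof -
    obtain m where m: "inverse (real (Suc m)) < \<epsilon> / 2" using reals_Archimedean[of "\<epsilon>/2"] e by auto
    have o: "open (ball v (1 / real (Suc m)))" and ne: "ball v (1 / real (Suc m)) \<noteq> {}" by auto
    obtain d where d0: "d \<in> D" "d \<in> ball v (1 / real (Suc m))" using D(2)[OF o ne] by blast
    have d: "d \<in> D" "dist v d < 1 / real (Suc m)" using d0 by auto
    obtain k where k: "from_nat_into D k = d" using from_nat_into_surj[OF D(1) d(1)] by blast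
    define i where "i = prod_encode (k, m)"
    have ci: "cen i = d" "rad i = 1 / real (Suc m)" unfolding cen_def rad_def i_def using k by simp_all
    have "v \<in> ball (cen i) (rad i)" using ci d(2) by (simp add: dist_commute)
    moreover have "cball (cen i) (rad i) \<subseteq> ball v \<epsilon>"
    proof
      fix u assume "u \<in> cball (cen i) (rad i)"
      then have "dist d u \<le> 1 / real (Suc m)" using ci by simp
      moreover have "dist v u \<le> dist v d + dist d u" by (rule dist_triangle)
      ultimately show "u \<in> ball v \<epsilon>" using d(2) m by (simp add: inverse_eq_divide)
    qed
    ultimately show ?thesis by blast
  qed
  then show ?thesis by (intro exI[of _ "\<lambda>i. (cen i, rad i)"]) auto
qed

definition ball_basis :: "nat \<Rightarrow> 'b::euclidean_space \<times> real" where
  "ball_basis = (SOME cr. \<forall>v \<epsilon>. 0 < \<epsilon> \<longrightarrow>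
     (\<exists>i. v \<in> ball (fst (cr i)) (snd (cr i)) \<and> cball (fst (cr i)) (snd (cr i)) \<subseteq> ball v \<epsilon>))"

definition basis_centre :: "nat \<Rightarrow> 'b::euclidean_space" where
  "basis_centre i = fst (ball_basis i)"

definition basis_ball :: "nat \<Rightarrow> 'b::euclidean_space set" where
  "basis_ball i = ball (basis_centre i) (snd (ball_basis i :: 'b \<times> real))"

definition basis_cball :: "nat \<Rightarrow> 'b::euclidean_space set" where
  "basis_cball i = cball (basis_centre i) (snd (ball_basis i :: 'b \<times> real))"

lemma basis_ball_refines:
  "0 < \<epsilon> \<Longrightarrow> \<exists>i. (v::'b::euclidean_space) \<in> basis_ball i \<and> basis_cball i \<subseteq> ball v \<epsilon>"
  using someI_ex[OF exists_countable_ball_basis]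
  unfolding basis_ball_def basis_cball_def basis_centre_def ball_basis_def by blast

lemma open_basis_ball: "open (basis_ball i)"
  unfolding basis_ball_def by simp

lemma compact_basis_cball: "compact (basis_cball i)"
  unfolding basis_cball_def by simp

lemma basis_ball_subset_cball: "basis_ball i \<subseteq> basis_cball i"
  unfolding basis_ball_def basis_cball_def by auto

lemma basis_centre_dense: "0 < \<epsilon> \<Longrightarrow> \<exists>k. dist (basis_centre k) (v::'b::euclidean_space) < \<epsilon>"
proof -
  assume "0 < \<epsilon>"
  then obtain i where i: "v \<in> basis_ball i" "basis_cball i \<subseteq> ball v \<epsilon>"
    using basis_ball_refines by blast
  then have "0 \<le> snd (ball_basis i :: 'b \<times> real)"
    unfolding basis_ball_def by (smt (verit) mem_ball zero_le_dist)
  then have "(basis_centre i :: 'b) \<in> basis_cball i" unfolding basis_cball_def by simp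
  then have "dist v (basis_centre i) < \<epsilon>" using i(2) by auto
  then show ?thesis by (auto simp: dist_commute)
qed

lemma compact_meets_closed_iff_infdist:
  fixes X C :: "'b::euclidean_space set"
  assumes X: "compact X" and C: "closed C" "C \<noteq> {}"
  shows "X \<inter> C \<noteq> {} \<longleftrightarrow> (\<forall>n::nat. \<exists>s\<in>X. infdist s C < 1 / Suc n)"
proof
  assume "X \<inter> C \<noteq> {}"
  then obtain p where p: "p \<in> X" "p \<in> C" by blast
  show "\<forall>n::nat. \<exists>s\<in>X. infdist s C < 1 / Suc n"
  proof (intro allI bexI[OF _ p(1)])
    fix n :: nat show "infdist p C < 1 / Suc n" using p(2) by simp
  qed
next
  assume H: "\<forall>n::nat. \<exists>s\<in>X. infdist s C < 1 / Suc n"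
  then have Xne: "X \<noteq> {}" by blast
  have le: "setdist X C < 1 / Suc n" for n
  proof -
    obtain s where s: "s \<in> X" "infdist s C < 1 / Suc n" using H by blast
    have "setdist X C \<le> setdist {s} C" by (rule setdist_le_sing[OF s(1)])
    then show ?thesis using s(2) by (simp add: infdist_eq_setdist)
  qed
  have "setdist X C \<le> 0"
  proof (rule ccontr)
    assume "\<not> setdist X C \<le> 0"
    then have "0 < setdist X C" by simp
    then obtain n where n: "inverse (real (Suc n)) < setdist X C" using reals_Archimedean by blast
    then show False using le[of n] by (simp add: inverse_eq_divide)
  qed
  then have "setdist X C = 0" using setdist_pos_le[of X C] by linarith
  then show "X \<inter> C \<noteq> {}" using setdist_eq_0_compact_closed[OF X C(1)] Xne C(2) by blast
qed

lemma closure_range_meets_closed_iff_infdist: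
  fixes x :: "nat \<Rightarrow> 'b::euclidean_space" and C :: "'b set"
  assumes X: "bounded (range x)" and C: "closed C" "C \<noteq> {}"
  shows "closure (range x) \<inter> C \<noteq> {} \<longleftrightarrow> (\<forall>n::nat. \<exists>i. infdist (x i) C < 1 / Suc n)"
proof
  assume "closure (range x) \<inter> C \<noteq> {}"
  then obtain p where p: "p \<in> closure (range x)" "p \<in> C" by blast
  show "\<forall>n::nat. \<exists>i. infdist (x i) C < 1 / Suc n"
  proof
    fix n :: nat
    have "0 < 1 / real (Suc n)" by simp
    then obtain y where "y \<in> range x" "dist y p < 1 / Suc n" using p(1) closure_approachable by blast
    then obtain i where "dist (x i) p < 1 / Suc n" by blast
    moreover have "infdist (x i) C \<le> dist (x i) p" using infdist_le[OF p(2)] .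
    ultimately have "infdist (x i) C < 1 / Suc n" by linarith
    then show "\<exists>i. infdist (x i) C < 1 / Suc n" by blast
  qed
next
  assume H: "\<forall>n::nat. \<exists>i. infdist (x i) C < 1 / Suc n"
  have "\<forall>n::nat. \<exists>s\<in>closure (range x). infdist s C < 1 / Suc n"
  proof
    fix n :: nat
    obtain i where i: "infdist (x i) C < 1 / Suc n" using H by blast
    have "x i \<in> closure (range x)" by (rule closure_subset[THEN subsetD]) simp
    then show "\<exists>s\<in>closure (range x). infdist s C < 1 / Suc n" using i by blast
  qed
  then show "closure (range x) \<inter> C \<noteq> {}"
    using compact_meets_closed_iff_infdist[of "closure (range x)" C] X C by simp
qed

lemma open_infdist_less: "open {v::'b::euclidean_space. infdist v C < e}"
  by (rule open_Collect_less) (auto intro!: continuous_intros)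

lemma meas_corr_meets_compact:
  fixes S :: "'a \<Rightarrow> 'b::euclidean_space set"
  assumes mc: "meas_corr M S" and nc: "nonempty_compact_values M S" and C: "compact C"
  shows "{\<omega>\<in>space M. S \<omega> \<inter> C \<noteq> {}} \<in> sets M"
proof (cases "C = {}")
  case True then show ?thesis by simp
next
  case False
  have Cc: "closed C" using C compact_imp_closed by blast
  have "{\<omega>\<in>space M. S \<omega> \<inter> C \<noteq> {}} = (\<Inter>n::nat. {\<omega>\<in>space M. S \<omega> \<inter> {v. infdist v C < 1 / Suc n} \<noteq> {}}) \<inter> space M"
  proof -
    have eq: "S \<omega> \<inter> C \<noteq> {} \<longleftrightarrow> (\<forall>n::nat. S \<omega> \<inter> {v. infdist v C < 1 / Suc n} \<noteq> {})" if "\<omega> \<in> space M" for \<omega>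
    proof -
      have cS: "compact (S \<omega>)" using nc that unfolding nonempty_compact_values_def by blast
      have "S \<omega> \<inter> C \<noteq> {} \<longleftrightarrow> (\<forall>n::nat. \<exists>s\<in>S \<omega>. infdist s C < 1 / Suc n)"
        by (rule compact_meets_closed_iff_infdist[OF cS Cc False])
      also have "\<dots> \<longleftrightarrow> (\<forall>n::nat. S \<omega> \<inter> {v. infdist v C < 1 / Suc n} \<noteq> {})" by blast
      finally show ?thesis .
    qed
    show ?thesis
    proof (rule set_eqI)
      fix \<omega>
      show "\<omega> \<in> {\<omega>\<in>space M. S \<omega> \<inter> C \<noteq> {}} \<longleftrightarrow> \<omega> \<in> (\<Inter>n::nat. {\<omega>\<in>space M. S \<omega> \<inter> {v. infdist v C < 1 / Suc n} \<noteq> {}}) \<inter> space M"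
        using eq[of \<omega>] by (cases "\<omega> \<in> space M") simp_all
    qed
  qed
  moreover have "{\<omega>\<in>space M. S \<omega> \<inter> {v. infdist v C < 1 / Suc n} \<noteq> {}} \<in> sets M" for n :: nat
    using mc open_infdist_less unfolding meas_corr_def by blast
  ultimately show ?thesis by auto
qed

lemma borel_measurable_infdist[measurable]:
  "f \<in> borel_measurable M \<Longrightarrow> (\<lambda>\<omega>. infdist (f \<omega>) C) \<in> borel_measurable M"
proof -
  assume f: "f \<in> borel_measurable M"
  have "(\<lambda>v. infdist v C) \<in> borel_measurable borel"
    by (rule borel_measurable_continuous_onI) (auto intro!: continuous_intros)
  from measurable_compose[OF f this] show ?thesis by simp
qed

lemma convergent_if_dist_Suc_less_geometric:
  fixes f :: "nat \<Rightarrow> 'b::banach"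
  assumes "\<And>n. dist (f (Suc n)) (f n) < 2 * (1/2)^n"
  shows "convergent f"
proof -
  have step: "norm (f (Suc j) - f j) \<le> 2 * (1/2)^j" for j
    using assms[of j] by (simp add: dist_norm)
  have "summable (\<lambda>j. 2 * ((1::real)/2)^j)" by (intro summable_mult summable_geometric) simp
  then have "summable (\<lambda>j. norm (f (Suc j) - f j))"
    by (rule summable_comparison_test[rotated]) (intro exI[of _ 0] allI impI, simp add: step)
  then have "summable (\<lambda>j. f (Suc j) - f j)" by (rule summable_norm_cancel)
  then have "(\<lambda>n. \<Sum>j<n. f (Suc j) - f j) \<longlonglongrightarrow> (\<Sum>j. f (Suc j) - f j)" by (rule summable_LIMSEQ)
  then have "(\<lambda>n. (f n - f 0) + f 0) \<longlonglongrightarrow> (\<Sum>j. f (Suc j) - f j) + f 0"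
    by (intro tendsto_intros) (simp add: sum_lessThan_telescope)
  then show ?thesis unfolding convergent_def by auto
qed

lemma LIMSEQ_mem_closed_if_near:
  fixes f :: "nat \<Rightarrow> 'b::metric_space"
  assumes lim: "f \<longlonglongrightarrow> x" and near: "\<And>n. \<exists>s\<in>S. dist (f n) s \<le> (1/2)^n" and S: "closed S"
  shows "x \<in> S"
proof -
  have "x \<in> closure S"
    unfolding closure_approachable
  proof (intro allI impI)
    fix \<epsilon> :: real assume e: "0 < \<epsilon>"
    have "\<forall>\<^sub>F n in sequentially. dist (f n) x < \<epsilon> / 2"
      using lim e by (intro tendstoD) auto
    moreover have "\<forall>\<^sub>F n in sequentially. ((1::real)/2)^n < \<epsilon> / 2"
      using LIMSEQ_realpow_zero[of "1/2::real"] e by (intro order_tendstoD(2)) auto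
    ultimately have "\<forall>\<^sub>F n in sequentially. dist (f n) x < \<epsilon> / 2 \<and> ((1::real)/2)^n < \<epsilon> / 2"
      by (rule eventually_conj)
    then obtain n where n: "dist (f n) x < \<epsilon> / 2" "((1::real)/2)^n < \<epsilon> / 2"
      unfolding eventually_sequentially by blast
    obtain s where s: "s \<in> S" "dist (f n) s \<le> (1/2)^n" using near by blast
    have "dist s x \<le> dist s (f n) + dist (f n) x" by (rule dist_triangle)
    then have "dist s x < \<epsilon>" using n s(2) by (simp add: dist_commute)
    then show "\<exists>s\<in>S. dist s x < \<epsilon>" using s(1) by blast
  qed
  then show ?thesis using S by simp
qed

text \<open>Kuratowski--Ryll-Nardzewski: \<open>krn_index S n \<omega>\<close> is the first basis centre within
  \<open>2 (1/2)^(n-1)\<close> of the previous one whose closed \<open>(1/2)^n\<close>-ball meets \<open>S \<omega>\<close>; the centres form a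
  Cauchy sequence converging into \<open>S \<omega>\<close>, and the least-index choice keeps them measurable.\<close>

primrec krn_index :: "('a \<Rightarrow> 'b::euclidean_space set) \<Rightarrow> nat \<Rightarrow> 'a \<Rightarrow> nat" where
  "krn_index S 0 \<omega> = (LEAST k. S \<omega> \<inter> cball (basis_centre k) 1 \<noteq> {})"
| "krn_index S (Suc n) \<omega> = (LEAST k. dist (basis_centre k) (basis_centre (krn_index S n \<omega>) :: 'b) < 2 * (1/2)^n
      \<and> S \<omega> \<inter> cball (basis_centre k) ((1/2)^(Suc n)) \<noteq> {})"

lemma krn_index_invariant:
  fixes S :: "'a \<Rightarrow> 'b::euclidean_space set"
  assumes ne: "S \<omega> \<noteq> {}"
  shows "S \<omega> \<inter> cball (basis_centre (krn_index S n \<omega>)) ((1/2)^n) \<noteq> {} \<and>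
         dist (basis_centre (krn_index S (Suc n) \<omega>)) (basis_centre (krn_index S n \<omega>) :: 'b) < 2 * (1/2)^n"
proof (induction n)
  case 0
  obtain s where s: "s \<in> S \<omega>" using ne by blast
  obtain k where "dist (basis_centre k) s < 1" using basis_centre_dense[of 1 s] by auto
  then have ex0: "\<exists>k. S \<omega> \<inter> cball (basis_centre k) 1 \<noteq> {}" using s by (auto intro!: exI[of _ k])
  have inv0: "S \<omega> \<inter> cball (basis_centre (krn_index S 0 \<omega>)) ((1/2)^0) \<noteq> {}"
    using LeastI_ex[OF ex0] by simp
  then obtain s where s: "s \<in> S \<omega>" "dist (basis_centre (krn_index S 0 \<omega>)) s \<le> 1" by auto
  obtain k where k: "dist (basis_centre k) s < 1/2" using basis_centre_dense[of "1/2" s] by auto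
  have "dist (basis_centre k :: 'b) (basis_centre (krn_index S 0 \<omega>)) < 2 * (1/2)^0 \<and> S \<omega> \<inter> cball (basis_centre k) ((1/2)^(Suc 0)) \<noteq> {}"
  proof
    have "dist (basis_centre k :: 'b) (basis_centre (krn_index S 0 \<omega>)) \<le> dist (basis_centre k) s + dist s (basis_centre (krn_index S 0 \<omega>))" by (metis dist_triangle)
    then show "dist (basis_centre k :: 'b) (basis_centre (krn_index S 0 \<omega>)) < 2 * (1/2)^0" using k s(2) by (simp add: dist_commute)
    show "S \<omega> \<inter> cball (basis_centre k) ((1/2)^(Suc 0)) \<noteq> {}" using k s(1) by (auto intro!: less_imp_le)
  qed
  then have "dist (basis_centre (krn_index S (Suc 0) \<omega>)) (basis_centre (krn_index S 0 \<omega>) :: 'b) < 2 * (1/2)^0"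
    unfolding krn_index.simps by (rule LeastI2_ex[OF exI]) auto
  then show ?case using inv0 by simp
next
  case (Suc n)
  let ?P = "\<lambda>n k. dist (basis_centre k) (basis_centre (krn_index S n \<omega>) :: 'b) < 2 * (1/2)^n \<and> S \<omega> \<inter> cball (basis_centre k) ((1/2)^(Suc n)) \<noteq> {}"
  have ex: "\<exists>k. ?P m k" if inv: "S \<omega> \<inter> cball (basis_centre (krn_index S m \<omega>)) ((1/2)^m) \<noteq> {}" for m
  proof -
    obtain s where s: "s \<in> S \<omega>" "dist (basis_centre (krn_index S m \<omega>)) s \<le> (1/2)^m" using inv by auto
    have "0 < ((1::real)/2)^(Suc m)" by simp
    then obtain k where k: "dist (basis_centre k) s < (1/2)^(Suc m)" using basis_centre_dense[of _ s] by blast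
    have "dist (basis_centre k :: 'b) (basis_centre (krn_index S m \<omega>)) \<le> dist (basis_centre k) s + dist s (basis_centre (krn_index S m \<omega>))" by (metis dist_triangle)
    moreover have "0 \<le> ((1::real)/2)^m" by simp
    moreover have "dist (basis_centre k :: 'b) s < (1/2)^m / 2" using k by simp
    moreover have "dist s (basis_centre (krn_index S m \<omega>) :: 'b) \<le> (1/2)^m" using s(2) by (simp add: dist_commute)
    ultimately have "dist (basis_centre k :: 'b) (basis_centre (krn_index S m \<omega>)) < 2 * (1/2)^m" by linarith
    moreover have "S \<omega> \<inter> cball (basis_centre k) ((1/2)^(Suc m)) \<noteq> {}" using k s(1) by (auto intro!: less_imp_le)
    ultimately show ?thesis by blast
  qed
  have inv1: "S \<omega> \<inter> cball (basis_centre (krn_index S (Suc n) \<omega>)) ((1/2)^(Suc n)) \<noteq> {}"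
    using LeastI_ex[OF ex[OF Suc.IH[THEN conjunct1]]] by simp
  have "?P (Suc n) (krn_index S (Suc (Suc n)) \<omega>)"
    using LeastI_ex[OF ex[OF inv1]] by simp
  then show ?case using inv1 by simp
qed

lemma measurable_krn_index:
  fixes S :: "'a \<Rightarrow> 'b::euclidean_space set"
  assumes ct: "\<And>c t. {\<omega>\<in>space M. S \<omega> \<inter> cball c t \<noteq> {}} \<in> sets M"
  shows "krn_index S n \<in> measurable M (count_space UNIV)"
proof (induction n)
  have p: "(\<lambda>\<omega>. S \<omega> \<inter> cball c t \<noteq> {}) \<in> measurable M (count_space UNIV)" for c t
    using ct[of c t] unfolding pred_def[symmetric] .
  case 0
  show ?case unfolding krn_index.simps by (rule measurable_Least) (rule p)
next
  have p: "(\<lambda>\<omega>. S \<omega> \<inter> cball c t \<noteq> {}) \<in> measurable M (count_space UNIV)" for c t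
    using ct[of c t] unfolding pred_def[symmetric] .
  case (Suc n)
  have q: "(\<lambda>\<omega>. dist (basis_centre k) (basis_centre (krn_index S n \<omega>) :: 'b) < 2 * (1/2)^n) \<in> measurable M (count_space UNIV)" for k
    by (rule measurable_compose[OF Suc.IH]) simp
  show ?case unfolding krn_index.simps
    by (rule measurable_Least) (intro pred_intros_logic q p)
qed

lemma exists_measurable_selector_closed:
  fixes S :: "'a \<Rightarrow> 'b::euclidean_space set"
  assumes ne: "\<And>\<omega>. \<omega> \<in> space M \<Longrightarrow> S \<omega> \<noteq> {}" and cl: "\<And>\<omega>. \<omega> \<in> space M \<Longrightarrow> closed (S \<omega>)"
    and ct: "\<And>c t. {\<omega>\<in>space M. S \<omega> \<inter> cball c t \<noteq> {}} \<in> sets M"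
  shows "\<exists>y\<in>borel_measurable M. \<forall>\<omega>\<in>space M. y \<omega> \<in> S \<omega>"
proof -
  define f where "f n \<omega> = (basis_centre (krn_index S n \<omega>) :: 'b)" for n \<omega>
  have fm: "f n \<in> borel_measurable M" for n
    unfolding f_def by (rule measurable_compose[OF measurable_krn_index[OF ct]]) simp
  have inv: "S \<omega> \<inter> cball (f n \<omega>) ((1/2)^n) \<noteq> {} \<and> dist (f (Suc n) \<omega>) (f n \<omega>) < 2 * (1/2)^n"
    if "\<omega> \<in> space M" for \<omega> n
    using krn_index_invariant[where S=S and \<omega>=\<omega>, OF ne[OF that]] unfolding f_def by blast
  define g where "g \<omega> = lim (\<lambda>n. f n \<omega>)" for \<omega>
  have lim: "(\<lambda>n. f n \<omega>) \<longlonglongrightarrow> g \<omega>" if "\<omega> \<in> space M" for \<omega>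
  proof -
    have "convergent (\<lambda>n. f n \<omega>)"
      by (rule convergent_if_dist_Suc_less_geometric) (use inv[OF that] in blast)
    then show ?thesis unfolding g_def by (simp add: convergent_LIMSEQ_iff)
  qed
  have "g \<in> borel_measurable M" by (rule borel_measurable_LIMSEQ_metric[OF fm lim])
  moreover have "g \<omega> \<in> S \<omega>" if "\<omega> \<in> space M" for \<omega>
  proof (rule LIMSEQ_mem_closed_if_near[OF lim[OF that] _ cl[OF that]])
    show "\<exists>s\<in>S \<omega>. dist (f n \<omega>) s \<le> (1/2)^n" for n using inv[OF that, of n] by auto
  qed
  ultimately show ?thesis by blast
qed

lemma exists_measurable_selector:
  fixes S :: "'a \<Rightarrow> 'b::euclidean_space set"
  assumes mc: "meas_corr M S" and nc: "nonempty_compact_values M S"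
  shows "\<exists>y\<in>borel_measurable M. \<forall>\<omega>\<in>space M. y \<omega> \<in> S \<omega>"
proof (rule exists_measurable_selector_closed)
  show "S \<omega> \<noteq> {}" if "\<omega> \<in> space M" for \<omega> using nc that unfolding nonempty_compact_values_def by blast
  show "closed (S \<omega>)" if "\<omega> \<in> space M" for \<omega>
    using nc that compact_imp_closed unfolding nonempty_compact_values_def by blast
  show "{\<omega> \<in> space M. S \<omega> \<inter> cball c t \<noteq> {}} \<in> sets M" for c t
    using meas_corr_meets_compact[OF mc nc] by simp
qed

section \<open>Sets of measurable selectors\<close>

lemma L0_selectorsI:
  assumes "y \<in> borel_measurable M" "z \<in> borel_measurable M" "\<And>\<omega>. \<omega> \<in> space M \<Longrightarrow> z \<omega> \<in> S \<omega>"
    and "AE \<omega> in M. y \<omega> = z \<omega>"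
  shows "y \<in> L0_selectors M S"
  using assms unfolding L0_selectors_def L0_def L0_aeq_def by blast

lemma L0_selectorsE:
  assumes "y \<in> L0_selectors M S"
  obtains z where "z \<in> borel_measurable M" "\<And>\<omega>. \<omega> \<in> space M \<Longrightarrow> z \<omega> \<in> S \<omega>"
    and "AE \<omega> in M. y \<omega> = z \<omega>"
  using assms unfolding L0_selectors_def L0_aeq_def by blast

lemma L0_selectors_measurable: "y \<in> L0_selectors M S \<Longrightarrow> y \<in> borel_measurable M"
  unfolding L0_selectors_def L0_def by blast

lemma L0_selectors_AE_memI:
  assumes y[measurable]: "y \<in> borel_measurable M"
    and s[measurable]: "s \<in> borel_measurable M" and s_mem: "\<And>\<omega>. \<omega> \<in> space M \<Longrightarrow> s \<omega> \<in> S \<omega>"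
    and AE: "AE \<omega> in M. y \<omega> \<in> S \<omega>"
  shows "y \<in> L0_selectors M S"
proof -
  obtain N where N: "\<And>\<omega>. \<omega> \<in> space M - N \<Longrightarrow> y \<omega> \<in> S \<omega>" and Nnull: "N \<in> null_sets M"
    using AE by (rule AE_E3) auto
  have [measurable]: "N \<in> sets M" using Nnull by blast
  define z where "z \<omega> = (if \<omega> \<in> N then s \<omega> else y \<omega>)" for \<omega>
  have "z \<in> borel_measurable M" unfolding z_def by measurable
  moreover have "z \<omega> \<in> S \<omega>" if "\<omega> \<in> space M" for \<omega> using N s_mem that unfolding z_def by auto
  moreover have "AE \<omega> in M. y \<omega> = z \<omega>" using AE_not_in[OF Nnull] by eventually_elim (simp add: z_def)
  ultimately show ?thesis by (rule L0_selectorsI[OF y])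
qed

lemma L0_saturated_selectors:
  fixes S :: "'a \<Rightarrow> 'b::euclidean_space set"
  shows "L0_saturated M (L0_selectors M S)"
  unfolding L0_saturated_def
proof (intro conjI ballI impI)
  show "L0_selectors M S \<subseteq> L0 M" unfolding L0_selectors_def by blast
  fix f g assume f: "f \<in> L0_selectors M S" and g: "g \<in> L0 M" and fg: "L0_aeq M f g"
  from f obtain z where z: "z \<in> borel_measurable M" "\<And>\<omega>. \<omega> \<in> space M \<Longrightarrow> z \<omega> \<in> S \<omega>"
    and fz: "AE \<omega> in M. f \<omega> = z \<omega>" by (rule L0_selectorsE) blast
  have "AE \<omega> in M. g \<omega> = z \<omega>" using fz fg unfolding L0_aeq_def by eventually_elim simp
  moreover have "g \<in> borel_measurable M" using g unfolding L0_def .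
  ultimately show "g \<in> L0_selectors M S" using L0_selectorsI[OF _ z] by blast
qed

lemma L0_stable_selectors:
  fixes S :: "'a \<Rightarrow> 'b::euclidean_space set"
  assumes mc: "meas_corr M S" and nc: "nonempty_compact_values M S"
  shows "L0_stable M (L0_selectors M S)"
  unfolding L0_stable_def
proof (intro conjI allI impI)
  let ?K = "L0_selectors M S"
  show "L0_saturated M ?K" by (rule L0_saturated_selectors)
  obtain y0 where "y0 \<in> borel_measurable M" "\<And>\<omega>. \<omega> \<in> space M \<Longrightarrow> y0 \<omega> \<in> S \<omega>"
    using exists_measurable_selector[OF mc nc] by blast
  then have "y0 \<in> ?K" by (intro L0_selectorsI) auto
  then show "?K \<noteq> {}" by blast
  fix A :: "nat \<Rightarrow> 'a set" and xs :: "nat \<Rightarrow> 'a \<Rightarrow> 'b"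
  assume "L0_partition M A \<and> (\<forall>k. xs k \<in> ?K)"
  then have A: "L0_partition M A" and xs: "\<And>k. xs k \<in> ?K" by auto
  have "\<exists>z. z \<in> borel_measurable M \<and> (\<forall>\<omega>\<in>space M. z \<omega> \<in> S \<omega>) \<and> (AE \<omega> in M. xs k \<omega> = z \<omega>)" for k
    by (rule L0_selectorsE[OF xs[of k]]) blast
  then obtain zs where zs: "\<And>k. zs k \<in> borel_measurable M" "\<And>k. \<forall>\<omega>\<in>space M. zs k \<omega> \<in> S \<omega>"
    "\<And>k. AE \<omega> in M. xs k \<omega> = zs k \<omega>"
    by metis
  have "L0_paste A zs \<omega> \<in> S \<omega>" if \<omega>: "\<omega> \<in> space M" for \<omega>
  proof -
    obtain k where k: "\<omega> \<in> A k" using L0_partition_cover[OF A \<omega>] by blast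
    show "L0_paste A zs \<omega> \<in> S \<omega>" using L0_paste_eq[OF A k, of zs] zs(2)[of k] \<omega> by simp
  qed
  moreover have "AE \<omega> in M. L0_paste A xs \<omega> = L0_paste A zs \<omega>"
  proof -
    have "AE \<omega> in M. \<forall>k. xs k \<omega> = zs k \<omega>" using zs(3) by (subst AE_all_countable) blast
    then show ?thesis using AE_space
    proof eventually_elim
      case (elim \<omega>)
      obtain k where k: "\<omega> \<in> A k" using L0_partition_cover[OF A elim(2)] by blast
      show ?case using elim(1) L0_paste_eq[OF A k, of zs] L0_paste_eq[OF A k, of xs] by simp
    qed
  qed
  moreover have "L0_paste A xs \<in> borel_measurable M" "L0_paste A zs \<in> borel_measurable M"
    using borel_measurable_L0_paste[OF A] L0_selectors_measurable[OF xs] zs(1) by auto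
  ultimately show "L0_paste A xs \<in> ?K" by (intro L0_selectorsI) auto
qed

lemma L0_seq_closed_selectors:
  fixes S :: "'a \<Rightarrow> 'b::euclidean_space set"
  assumes mc: "meas_corr M S" and nc: "nonempty_compact_values M S"
  shows "L0_seq_closed M (L0_selectors M S)"
  unfolding L0_seq_closed_def
proof (intro allI impI)
  fix xs x assume "(\<forall>n. xs n \<in> L0_selectors M S) \<and> x \<in> L0 M \<and> (AE \<omega> in M. (\<lambda>n. xs n \<omega>) \<longlonglongrightarrow> x \<omega>)"
  then have xs: "\<And>n. xs n \<in> L0_selectors M S" and xm: "x \<in> borel_measurable M"
    and conv: "AE \<omega> in M. (\<lambda>n. xs n \<omega>) \<longlonglongrightarrow> x \<omega>" unfolding L0_def by auto
  have "\<exists>z. (\<forall>\<omega>\<in>space M. z \<omega> \<in> S \<omega>) \<and> (AE \<omega> in M. xs k \<omega> = z \<omega>)" for k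
    by (rule L0_selectorsE[OF xs[of k]]) blast
  then obtain zs where zs: "\<And>k. \<forall>\<omega>\<in>space M. zs k \<omega> \<in> S \<omega>" "\<And>k. AE \<omega> in M. xs k \<omega> = zs k \<omega>"
    by metis
  have "AE \<omega> in M. \<forall>k. xs k \<omega> = zs k \<omega>" using zs(2) by (subst AE_all_countable) blast
  then have "AE \<omega> in M. x \<omega> \<in> S \<omega>" using conv AE_space
  proof eventually_elim
    case (elim \<omega>)
    have lim: "(\<lambda>n. zs n \<omega>) \<longlonglongrightarrow> x \<omega>" using elim(1,2) by simp
    have mem: "\<forall>n. zs n \<omega> \<in> S \<omega>" using zs(1) elim(3) by blast
    have "closed (S \<omega>)"
      using nc elim(3) compact_imp_closed unfolding nonempty_compact_values_def by blast
    from closed_sequential_limits[THEN iffD1, OF this, rule_format, of "\<lambda>n. zs n \<omega>" "x \<omega>"]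
    show ?case using lim mem by blast
  qed
  moreover obtain y0 where "y0 \<in> borel_measurable M" "\<And>\<omega>. \<omega> \<in> space M \<Longrightarrow> y0 \<omega> \<in> S \<omega>"
    using exists_measurable_selector[OF mc nc] by blast
  ultimately show "x \<in> L0_selectors M S" by (intro L0_selectors_AE_memI[OF xm]) auto
qed

lemma L0_bounded_selectors:
  fixes S :: "'a \<Rightarrow> 'b::euclidean_space set"
  assumes mc: "meas_corr M S" and nc: "nonempty_compact_values M S"
  shows "L0_bounded M (L0_selectors M S)"
  unfolding L0_bounded_def
proof
  define b where "b \<omega> = Sup (norm ` S \<omega>)" for \<omega>
  have ne: "S \<omega> \<noteq> {}" and bdd: "bdd_above (norm ` S \<omega>)" if "\<omega> \<in> space M" for \<omega>
    using nc that compact_imp_bounded unfolding nonempty_compact_values_def by (auto simp: bdd_above_norm)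
  have eq: "{\<omega>\<in>space M. a < b \<omega>} = {\<omega>\<in>space M. S \<omega> \<inter> {v. a < norm v} \<noteq> {}}" for a
  proof (rule set_eqI)
    fix \<omega>
    show "\<omega> \<in> {\<omega>\<in>space M. a < b \<omega>} \<longleftrightarrow> \<omega> \<in> {\<omega>\<in>space M. S \<omega> \<inter> {v. a < norm v} \<noteq> {}}"
    proof (cases "\<omega> \<in> space M")
      case True
      have "a < b \<omega> \<longleftrightarrow> (\<exists>r\<in>norm ` S \<omega>. a < r)"
        unfolding b_def using ne[OF True] bdd[OF True] by (intro less_cSup_iff) auto
      also have "\<dots> \<longleftrightarrow> S \<omega> \<inter> {v. a < norm v} \<noteq> {}" by blast
      finally show ?thesis using True by simp
    qed simp
  qed
  have "open {v::'b. a < norm v}" for a by (rule open_Collect_less) (auto intro!: continuous_intros)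
  then show "b \<in> borel_measurable M"
    unfolding borel_measurable_iff_greater eq using mc unfolding meas_corr_def by blast
  show "\<forall>x\<in>L0_selectors M S. AE \<omega> in M. norm (x \<omega>) \<le> b \<omega>"
  proof
    fix x assume "x \<in> L0_selectors M S"
    then obtain z where z: "\<And>\<omega>. \<omega> \<in> space M \<Longrightarrow> z \<omega> \<in> S \<omega>" and xz: "AE \<omega> in M. x \<omega> = z \<omega>"
      by (rule L0_selectorsE) blast
    show "AE \<omega> in M. norm (x \<omega>) \<le> b \<omega>" using xz AE_space
    proof eventually_elim
      case (elim \<omega>)
      have "norm (z \<omega>) \<le> b \<omega>" unfolding b_def using z[OF elim(2)] bdd[OF elim(2)]
        by (intro cSup_upper) auto
      then show ?case using elim(1) by simp
    qed
  qed
qed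

lemma exists_measurable_selector_meeting:
  fixes S :: "'a \<Rightarrow> 'b::euclidean_space set"
  assumes mc: "meas_corr M S" and nc: "nonempty_compact_values M S" and C: "compact C"
  shows "\<exists>y\<in>borel_measurable M. \<forall>\<omega>\<in>space M. y \<omega> \<in> S \<omega> \<and> (S \<omega> \<inter> C \<noteq> {} \<longrightarrow> y \<omega> \<in> C)"
proof -
  have ncS: "\<And>\<omega>. \<omega> \<in> space M \<Longrightarrow> S \<omega> \<noteq> {} \<and> compact (S \<omega>)"
    using nc unfolding nonempty_compact_values_def by blast
  define N where "N = {\<omega>\<in>space M. S \<omega> \<inter> C \<noteq> {}}"
  have Nm: "N \<in> sets M" unfolding N_def using meas_corr_meets_compact[OF mc nc C] .
  define SC where "SC \<omega> = (if \<omega> \<in> N then S \<omega> \<inter> C else S \<omega>)" for \<omega>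
  have "\<exists>y\<in>borel_measurable M. \<forall>\<omega>\<in>space M. y \<omega> \<in> SC \<omega>"
  proof (rule exists_measurable_selector_closed)
    show "SC \<omega> \<noteq> {}" if "\<omega> \<in> space M" for \<omega> using ncS[OF that] unfolding SC_def N_def by auto
    show "closed (SC \<omega>)" if "\<omega> \<in> space M" for \<omega>
      using ncS[OF that] compact_imp_closed C unfolding SC_def by auto
    fix c t
    have "{\<omega> \<in> space M. SC \<omega> \<inter> cball c t \<noteq> {}} =
      (N \<inter> {\<omega> \<in> space M. S \<omega> \<inter> (C \<inter> cball c t) \<noteq> {}}) \<union> ((space M - N) \<inter> {\<omega> \<in> space M. S \<omega> \<inter> cball c t \<noteq> {}})"
      unfolding SC_def by (auto simp: Int_assoc)
    moreover have "{\<omega> \<in> space M. S \<omega> \<inter> (C \<inter> cball c t) \<noteq> {}} \<in> sets M"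
      using meas_corr_meets_compact[OF mc nc compact_Int_closed[OF C closed_cball]] .
    moreover have "{\<omega> \<in> space M. S \<omega> \<inter> cball c t \<noteq> {}} \<in> sets M"
      using meas_corr_meets_compact[OF mc nc] by simp
    ultimately show "{\<omega> \<in> space M. SC \<omega> \<inter> cball c t \<noteq> {}} \<in> sets M" using Nm by auto
  qed
  then show ?thesis unfolding SC_def N_def by (auto split: if_splits)
qed

lemma AE_subset_if_L0_selectors_subset:
  fixes S S' :: "'a \<Rightarrow> 'b::euclidean_space set"
  assumes mc: "meas_corr M S" and nc: "nonempty_compact_values M S"
    and nc': "nonempty_compact_values M S'"
    and sub: "L0_selectors M S \<subseteq> L0_selectors M S'"
  shows "AE \<omega> in M. S \<omega> \<subseteq> S' \<omega>"
proof -
  obtain ys where ysm: "\<And>i. ys i \<in> borel_measurable M"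
    and ys: "\<And>i. \<forall>\<omega>\<in>space M. ys i \<omega> \<in> S \<omega> \<and> (S \<omega> \<inter> basis_cball i \<noteq> {} \<longrightarrow> ys i \<omega> \<in> basis_cball i)"
    using exists_measurable_selector_meeting[OF mc nc compact_basis_cball] by metis
  have "AE \<omega> in M. ys i \<omega> \<in> S' \<omega>" for i
  proof -
    have "ys i \<in> L0_selectors M S" using ysm ys by (intro L0_selectorsI) auto
    then have "ys i \<in> L0_selectors M S'" using sub by blast
    then obtain z where z: "\<And>\<omega>. \<omega> \<in> space M \<Longrightarrow> z \<omega> \<in> S' \<omega>" and yz: "AE \<omega> in M. ys i \<omega> = z \<omega>"
      by (rule L0_selectorsE) blast
    show ?thesis using yz AE_space by eventually_elim (use z in auto)
  qed
  then have "AE \<omega> in M. \<forall>i. ys i \<omega> \<in> S' \<omega>" by (subst AE_all_countable) blast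
  then show ?thesis using AE_space
  proof eventually_elim
    case (elim \<omega>)
    show ?case
    proof
      fix v assume v: "v \<in> S \<omega>"
      have "v \<in> closure (S' \<omega>)"
        unfolding closure_approachable
      proof (intro allI impI)
        fix \<epsilon> :: real assume e: "0 < \<epsilon>"
        obtain i where i: "v \<in> basis_ball i" "basis_cball i \<subseteq> ball v \<epsilon>" using basis_ball_refines[OF e] by blast
        have "S \<omega> \<inter> basis_cball i \<noteq> {}" using v i(1) basis_ball_subset_cball by blast
        then have "ys i \<omega> \<in> basis_cball i" using ys[of i] elim(2) by blast
        then have "dist v (ys i \<omega>) < \<epsilon>" using i(2) by auto
        then show "\<exists>s\<in>S' \<omega>. dist s v < \<epsilon>" using elim(1) by (auto simp: dist_commute)
      qed
      then show "v \<in> S' \<omega>"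
        using nc' elim(2) compact_imp_closed closure_closed unfolding nonempty_compact_values_def by metis
    qed
  qed
qed

lemma AE_eq_if_L0_selectors_eq:
  fixes S S' :: "'a \<Rightarrow> 'b::euclidean_space set"
  assumes "meas_corr M S" "nonempty_compact_values M S"
    and "meas_corr M S'" "nonempty_compact_values M S'"
    and "L0_selectors M S = L0_selectors M S'"
  shows "AE \<omega> in M. S \<omega> = S' \<omega>"
proof -
  have "AE \<omega> in M. S \<omega> \<subseteq> S' \<omega>" "AE \<omega> in M. S' \<omega> \<subseteq> S \<omega>"
    using AE_subset_if_L0_selectors_subset assms by blast+
  then show ?thesis by eventually_elim blast
qed

section \<open>The essential range of a stable set\<close>

definition L0_dense_seq :: "'a measure \<Rightarrow> ('a \<Rightarrow> 'b::euclidean_space) set \<Rightarrow> nat \<Rightarrow> 'a \<Rightarrow> 'b" where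
  "L0_dense_seq M B i = (SOME y. y \<in> B \<and> (\<forall>z\<in>B. AE \<omega> in M. z \<omega> \<in> basis_ball i \<longrightarrow> y \<omega> \<in> basis_ball i))"

lemma L0_dense_seq_spec:
  fixes B :: "('a \<Rightarrow> 'b::euclidean_space) set"
  assumes M: "prob_space M" and B: "L0_stable M B"
  shows "L0_dense_seq M B i \<in> B \<and> (\<forall>z\<in>B. AE \<omega> in M. z \<omega> \<in> basis_ball i \<longrightarrow> L0_dense_seq M B i \<omega> \<in> basis_ball i)"
proof -
  have "\<exists>x0\<in>B. \<forall>x\<in>B. AE \<omega> in M. x \<omega> \<in> basis_ball i \<longrightarrow> x0 \<omega> \<in> basis_ball i"
  proof (rule L0_stable_AE_maximal_element[OF M B, where P="\<lambda>v \<omega>. v \<in> basis_ball i"])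
    fix x assume "x \<in> B"
    then have xm: "x \<in> borel_measurable M" using L0_stable_measurable[OF B] by blast
    have "x -` basis_ball i \<inter> space M \<in> sets M" using measurable_sets[OF xm borel_open[OF open_basis_ball]] .
    moreover have "{\<omega> \<in> space M. x \<omega> \<in> basis_ball i} = x -` basis_ball i \<inter> space M" by blast
    ultimately show "{\<omega> \<in> space M. x \<omega> \<in> basis_ball i} \<in> sets M" by simp
  qed
  then have "\<exists>y. y \<in> B \<and> (\<forall>z\<in>B. AE \<omega> in M. z \<omega> \<in> basis_ball i \<longrightarrow> y \<omega> \<in> basis_ball i)" by blast
  then show ?thesis unfolding L0_dense_seq_def by (rule someI_ex)
qed

lemma L0_dense_seq_in: "prob_space M \<Longrightarrow> L0_stable M B \<Longrightarrow> L0_dense_seq M B i \<in> B"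
  using L0_dense_seq_spec by blast

lemma AE_in_closure_L0_dense_seq:
  fixes B :: "('a \<Rightarrow> 'b::euclidean_space) set"
  assumes M: "prob_space M" and B: "L0_stable M B" and y: "y \<in> B"
  shows "AE \<omega> in M. y \<omega> \<in> closure (range (\<lambda>i. L0_dense_seq M B i \<omega>))"
proof -
  have "AE \<omega> in M. \<forall>i. y \<omega> \<in> basis_ball i \<longrightarrow> L0_dense_seq M B i \<omega> \<in> basis_ball i"
    using L0_dense_seq_spec[OF M B] y by (subst AE_all_countable) blast
  then show ?thesis
  proof eventually_elim
    case (elim \<omega>)
    show ?case unfolding closure_approachable
    proof (intro allI impI)
      fix \<epsilon> :: real assume e: "0 < \<epsilon>"
      obtain i where i: "y \<omega> \<in> basis_ball i" "basis_cball i \<subseteq> ball (y \<omega>) \<epsilon>" using basis_ball_refines[OF e] by blast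
      have "L0_dense_seq M B i \<omega> \<in> ball (y \<omega>) \<epsilon>" using elim i basis_ball_subset_cball by blast
      then show "\<exists>x\<in>range (\<lambda>i. L0_dense_seq M B i \<omega>). dist x (y \<omega>) < \<epsilon>" by (auto simp: dist_commute)
    qed
  qed
qed

lemma sets_closure_range_meets_open:
  fixes x :: "nat \<Rightarrow> 'a \<Rightarrow> 'b::euclidean_space"
  assumes xm: "\<And>i. x i \<in> borel_measurable M" and U: "open U"
  shows "{\<omega>\<in>space M. closure (range (\<lambda>i. x i \<omega>)) \<inter> U \<noteq> {}} \<in> sets M"
proof -
  have eq: "{\<omega>\<in>space M. closure (range (\<lambda>i. x i \<omega>)) \<inter> U \<noteq> {}} = (\<Union>i. x i -` U \<inter> space M)"
  proof -
    have "closure (range (\<lambda>i. x i \<omega>)) \<inter> U \<noteq> {} \<longleftrightarrow> (\<exists>i. x i \<omega> \<in> U)" for \<omega>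
      using open_Int_closure_eq_empty[OF U, of "range (\<lambda>i. x i \<omega>)"] by (auto simp: Int_commute)
    then show ?thesis by blast
  qed
  have "x i -` U \<inter> space M \<in> sets M" for i using measurable_sets[OF xm U[THEN borel_open]] .
  then have "(\<Union>i. x i -` U \<inter> space M) \<in> sets M" by (intro sets.countable_UN'') auto
  then show ?thesis unfolding eq .
qed

definition L0_ess_range :: "'a measure \<Rightarrow> ('a \<Rightarrow> 'b::euclidean_space) set \<Rightarrow> 'a \<Rightarrow> 'b set" where
  "L0_ess_range M B \<omega> = closure (range (\<lambda>i. L0_dense_seq M B i \<omega>))"

definition L0_ess_range_misses :: "'a measure \<Rightarrow> ('a \<Rightarrow> 'b::euclidean_space) set \<Rightarrow> nat \<Rightarrow> 'a set" where
  "L0_ess_range_misses M B j = {\<omega>\<in>space M. L0_ess_range M B \<omega> \<inter> basis_ball j = {}}"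

lemma AE_in_L0_ess_range: "prob_space M \<Longrightarrow> L0_stable M B \<Longrightarrow> y \<in> B \<Longrightarrow> AE \<omega> in M. y \<omega> \<in> L0_ess_range M B \<omega>"
  unfolding L0_ess_range_def by (rule AE_in_closure_L0_dense_seq)

lemma L0_ess_range_subset_closed:
  assumes "\<forall>i. L0_dense_seq M B i \<omega> \<in> X" "closed X"
  shows "L0_ess_range M B \<omega> \<subseteq> X"
  unfolding L0_ess_range_def using assms closure_minimal[of "range (\<lambda>i. L0_dense_seq M B i \<omega>)" X] by blast

lemma AE_L0_ess_range_mono:
  fixes B B' :: "('a \<Rightarrow> 'b::euclidean_space) set"
  assumes M: "prob_space M" and B: "L0_stable M B" and B': "L0_stable M B'" and sub: "B \<subseteq> B'"
  shows "AE \<omega> in M. L0_ess_range M B \<omega> \<subseteq> L0_ess_range M B' \<omega>"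
proof -
  have "AE \<omega> in M. L0_dense_seq M B i \<omega> \<in> L0_ess_range M B' \<omega>" for i
    using AE_in_L0_ess_range[OF M B'] L0_dense_seq_in[OF M B] sub by blast
  then have "AE \<omega> in M. \<forall>i. L0_dense_seq M B i \<omega> \<in> L0_ess_range M B' \<omega>" by (subst AE_all_countable) blast
  then show ?thesis
  proof eventually_elim
    case (elim \<omega>)
    show ?case by (rule L0_ess_range_subset_closed[OF elim]) (simp add: L0_ess_range_def)
  qed
qed

lemma AE_L0_ess_range_paste_set:
  fixes Ys :: "nat \<Rightarrow> ('a \<Rightarrow> 'b::euclidean_space) set"
  assumes M: "prob_space M" and A: "L0_partition M A" and Ys: "\<And>k. L0_stable M (Ys k)"
    and P: "L0_stable M (L0_paste_set M A Ys)"
  shows "AE \<omega> in M. \<forall>k. \<omega> \<in> A k \<longrightarrow> L0_ess_range M (L0_paste_set M A Ys) \<omega> \<subseteq> L0_ess_range M (Ys k) \<omega>"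
proof -
  let ?B = "L0_paste_set M A Ys"
  have "AE \<omega> in M. \<forall>k. \<omega> \<in> A k \<longrightarrow> L0_dense_seq M ?B i \<omega> \<in> L0_ess_range M (Ys k) \<omega>" for i
  proof -
    have "L0_dense_seq M ?B i \<in> ?B" using L0_dense_seq_in[OF M P] .
    then obtain xs where xs: "\<And>k. xs k \<in> Ys k" and eq: "L0_aeq M (L0_dense_seq M ?B i) (L0_paste A xs)"
      unfolding L0_paste_set_def by blast
    have "AE \<omega> in M. \<forall>k. xs k \<omega> \<in> L0_ess_range M (Ys k) \<omega>"
      using AE_in_L0_ess_range[OF M Ys xs] by (subst AE_all_countable) blast
    then show ?thesis using eq unfolding L0_aeq_def
    proof eventually_elim
      case (elim \<omega>)
      show ?case using elim L0_paste_eq[OF A, of \<omega> _ xs] by auto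
    qed
  qed
  then have "AE \<omega> in M. \<forall>i k. \<omega> \<in> A k \<longrightarrow> L0_dense_seq M ?B i \<omega> \<in> L0_ess_range M (Ys k) \<omega>" by (subst AE_all_countable) blast
  then show ?thesis
  proof eventually_elim
    case (elim \<omega>)
    show ?case
    proof (intro allI impI)
      fix k assume "\<omega> \<in> A k"
      then show "L0_ess_range M ?B \<omega> \<subseteq> L0_ess_range M (Ys k) \<omega>"
        using elim by (intro L0_ess_range_subset_closed) (auto simp: L0_ess_range_def)
    qed
  qed
qed

lemma sets_L0_ess_range_misses:
  fixes B :: "('a \<Rightarrow> 'b::euclidean_space) set"
  assumes M: "prob_space M" and B: "L0_stable M B"
  shows "L0_ess_range_misses M B j \<in> sets M"
proof -
  have xm: "L0_dense_seq M B i \<in> borel_measurable M" for i using L0_stable_measurable[OF B L0_dense_seq_in[OF M B]] .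
  have "{\<omega>\<in>space M. L0_ess_range M B \<omega> \<inter> basis_ball j \<noteq> {}} \<in> sets M"
    unfolding L0_ess_range_def by (rule sets_closure_range_meets_open[where x="L0_dense_seq M B", OF xm open_basis_ball])
  then have "space M - {\<omega>\<in>space M. L0_ess_range M B \<omega> \<inter> basis_ball j \<noteq> {}} \<in> sets M" by blast
  moreover have "L0_ess_range_misses M B j = space M - {\<omega>\<in>space M. L0_ess_range M B \<omega> \<inter> basis_ball j \<noteq> {}}" unfolding L0_ess_range_misses_def by blast
  ultimately show ?thesis by simp
qed

lemma L0_ess_range_misses_AE_maximal:
  fixes \<B> :: "('a \<Rightarrow> 'b::euclidean_space) set set"
  assumes M: "prob_space M" and ne: "\<B> \<noteq> {}" and st: "\<And>B. B \<in> \<B> \<Longrightarrow> L0_stable M B"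
    and pc: "\<And>A Ys. L0_partition M A \<Longrightarrow> (\<And>k. Ys k \<in> \<B>) \<Longrightarrow> L0_paste_set M A Ys \<in> \<B>"
  shows "\<exists>B0\<in>\<B>. \<forall>B\<in>\<B>. AE \<omega> in M. \<omega> \<in> L0_ess_range_misses M B j \<longrightarrow> \<omega> \<in> L0_ess_range_misses M B0 j"
proof -
  have "\<exists>F\<in>(\<lambda>B. L0_ess_range_misses M B j) ` \<B>. \<forall>E\<in>(\<lambda>B. L0_ess_range_misses M B j) ` \<B>. AE \<omega> in M. \<omega> \<in> E \<longrightarrow> \<omega> \<in> F"
  proof (rule exists_AE_maximal_set[OF M])
    show "(\<lambda>B. L0_ess_range_misses M B j) ` \<B> \<subseteq> sets M" using sets_L0_ess_range_misses[OF M st] by blast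
    show "(\<lambda>B. L0_ess_range_misses M B j) ` \<B> \<noteq> {}" using ne by blast
    fix E :: "nat \<Rightarrow> 'a set" assume "range E \<subseteq> (\<lambda>B. L0_ess_range_misses M B j) ` \<B>"
    then have "\<forall>k. \<exists>B\<in>\<B>. E k = L0_ess_range_misses M B j" by blast
    then obtain Bs where Bs: "\<And>k. Bs k \<in> \<B>" "\<And>k. E k = L0_ess_range_misses M (Bs k) j" by metis
    have Em: "E k \<in> sets M" for k using Bs sets_L0_ess_range_misses[OF M st] by simp
    define A where "A = first_hit_partition M E"
    have A: "L0_partition M A" unfolding A_def using L0_partition_first_hit_partition[OF Em] .
    have PB: "L0_paste_set M A Bs \<in> \<B>" using pc[OF A Bs(1)] .
    have "AE \<omega> in M. \<forall>k. \<omega> \<in> A k \<longrightarrow> L0_ess_range M (L0_paste_set M A Bs) \<omega> \<subseteq> L0_ess_range M (Bs k) \<omega>"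
      using AE_L0_ess_range_paste_set[OF M A st[OF Bs(1)] st[OF PB]] .
    then have "AE \<omega> in M. \<omega> \<in> (\<Union>i. E i) \<longrightarrow> \<omega> \<in> L0_ess_range_misses M (L0_paste_set M A Bs) j" using AE_space
    proof eventually_elim
      case (elim \<omega>)
      show ?case
      proof
        assume U: "\<omega> \<in> (\<Union>i. E i)"
        obtain k where k: "\<omega> \<in> A k" using L0_partition_cover[OF A elim(2)] by blast
        have "\<omega> \<in> E k" using first_hit_partition_first[OF k[unfolded A_def] U] by blast
        then have "L0_ess_range M (Bs k) \<omega> \<inter> basis_ball j = {}" using Bs(2)[of k] unfolding L0_ess_range_misses_def by blast
        then have "L0_ess_range M (L0_paste_set M A Bs) \<omega> \<inter> basis_ball j = {}" using elim(1) k by blast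
        then show "\<omega> \<in> L0_ess_range_misses M (L0_paste_set M A Bs) j" using elim(2) unfolding L0_ess_range_misses_def by blast
      qed
    qed
    then show "\<exists>F\<in>(\<lambda>B. L0_ess_range_misses M B j) ` \<B>. AE \<omega> in M. \<omega> \<in> (\<Union>i. E i) \<longrightarrow> \<omega> \<in> F" using PB by blast
  qed
  then show ?thesis by blast
qed

lemma nonempty_compact_values_closure_range:
  fixes xs :: "nat \<Rightarrow> 'a \<Rightarrow> 'b::euclidean_space"
  assumes "\<And>\<omega> i. \<omega> \<in> space M \<Longrightarrow> norm (xs i \<omega>) \<le> b \<omega>"
  shows "nonempty_compact_values M (\<lambda>\<omega>. closure (range (\<lambda>i. xs i \<omega>)))"
  unfolding nonempty_compact_values_def
proof (intro ballI conjI)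
  fix \<omega> assume "\<omega> \<in> space M"
  then have "range (\<lambda>i. xs i \<omega>) \<subseteq> cball 0 (b \<omega>)" using assms by auto
  then have "bounded (range (\<lambda>i. xs i \<omega>))" using bounded_cball bounded_subset by blast
  then show "compact (closure (range (\<lambda>i. xs i \<omega>)))" by simp
qed simp

lemma L0_selectors_closure_range:
  fixes xs :: "nat \<Rightarrow> 'a \<Rightarrow> 'b::euclidean_space"
  assumes K: "L0_stable M K" and sc: "L0_seq_closed M K" and xs: "\<And>i. xs i \<in> K"
    and dense: "\<And>y. y \<in> K \<Longrightarrow> AE \<omega> in M. y \<omega> \<in> closure (range (\<lambda>i. xs i \<omega>))"
  shows "K = L0_selectors M (\<lambda>\<omega>. closure (range (\<lambda>i. xs i \<omega>)))"
proof
  have xsm: "xs i \<in> borel_measurable M" for i using L0_stable_measurable[OF K xs] .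
  show "K \<subseteq> L0_selectors M (\<lambda>\<omega>. closure (range (\<lambda>i. xs i \<omega>)))"
  proof
    fix y assume y: "y \<in> K"
    show "y \<in> L0_selectors M (\<lambda>\<omega>. closure (range (\<lambda>i. xs i \<omega>)))"
    proof (rule L0_selectors_AE_memI)
      show "y \<in> borel_measurable M" using L0_stable_measurable[OF K y] .
      show "xs 0 \<in> borel_measurable M" by (rule xsm)
      show "xs 0 \<omega> \<in> closure (range (\<lambda>i. xs i \<omega>))" for \<omega>
        by (rule closure_subset[THEN subsetD]) simp
      show "AE \<omega> in M. y \<omega> \<in> closure (range (\<lambda>i. xs i \<omega>))" by (rule dense[OF y])
    qed
  qed
  show "L0_selectors M (\<lambda>\<omega>. closure (range (\<lambda>i. xs i \<omega>))) \<subseteq> K"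
  proof
    fix y assume y: "y \<in> L0_selectors M (\<lambda>\<omega>. closure (range (\<lambda>i. xs i \<omega>)))"
    then obtain z where z: "z \<in> borel_measurable M"
      and zS: "\<And>\<omega>. \<omega> \<in> space M \<Longrightarrow> z \<omega> \<in> closure (range (\<lambda>i. xs i \<omega>))"
      and yz: "AE \<omega> in M. y \<omega> = z \<omega>"
      by (rule L0_selectorsE) blast
    have "AE \<omega> in M. z \<omega> \<in> closure (range (\<lambda>i. xs i \<omega>))" using zS by (rule AE_I2)
    then have "z \<in> K" by (rule L0_seq_closed_AE_closure_mem[OF K sc xs z])
    moreover have "AE \<omega> in M. z \<omega> = y \<omega>" using yz by eventually_elim simp
    ultimately show "y \<in> K"
      using L0_saturated_AE_eq[OF L0_stable_saturated[OF K]] L0_selectors_measurable[OF y] by blast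
  qed
qed

lemma L0_stable_seq_closed_bounded_imp_selectors:
  fixes K :: "('a \<Rightarrow> 'b::euclidean_space) set"
  assumes M: "prob_space M" and K: "L0_stable M K" and sc: "L0_seq_closed M K" and bd: "L0_bounded M K"
  shows "\<exists>S. meas_corr M S \<and> nonempty_compact_values M S \<and> K = L0_selectors M S"
proof -
  define x where "x = L0_dense_seq M K"
  have xK: "x i \<in> K" for i unfolding x_def using L0_dense_seq_in[OF M K] .
  have [measurable]: "x i \<in> borel_measurable M" for i using L0_stable_measurable[OF K xK] .
  obtain b where b: "\<And>y. y \<in> K \<Longrightarrow> AE \<omega> in M. norm (y \<omega>) \<le> b \<omega>"
    using bd unfolding L0_bounded_def by blast
  have "AE \<omega> in M. \<forall>i. norm (x i \<omega>) \<le> b \<omega>" using b xK by (subst AE_all_countable) blast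
  then obtain N where N: "\<And>\<omega> i. \<omega> \<in> space M - N \<Longrightarrow> norm (x i \<omega>) \<le> b \<omega>" and Nnull: "N \<in> null_sets M"
    by (rule AE_E3) auto
  have [measurable]: "N \<in> sets M" using Nnull by blast
  have notN: "AE \<omega> in M. \<omega> \<notin> N" using AE_not_in[OF Nnull] .
  \<comment> \<open>Modify \<open>x\<close> on the null set \<open>N\<close> so that it is bounded everywhere.\<close>
  define x' where "x' i \<omega> = (if \<omega> \<in> N then 0 else x i \<omega>)" for i \<omega>
  have x'm[measurable]: "x' i \<in> borel_measurable M" for i unfolding x'_def by measurable
  have x'K: "x' i \<in> K" for i
  proof (rule L0_saturated_AE_eq[OF L0_stable_saturated[OF K] xK x'm])
    show "AE \<omega> in M. x i \<omega> = x' i \<omega>" using notN by eventually_elim (simp add: x'_def)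
  qed
  have "K = L0_selectors M (\<lambda>\<omega>. closure (range (\<lambda>i. x' i \<omega>)))"
  proof (rule L0_selectors_closure_range[OF K sc x'K])
    fix y assume "y \<in> K"
    have "AE \<omega> in M. y \<omega> \<in> closure (range (\<lambda>i. x i \<omega>))"
      unfolding x_def using AE_in_closure_L0_dense_seq[OF M K \<open>y \<in> K\<close>] .
    then show "AE \<omega> in M. y \<omega> \<in> closure (range (\<lambda>i. x' i \<omega>))"
      using notN by eventually_elim (simp add: x'_def)
  qed
  moreover have "meas_corr M (\<lambda>\<omega>. closure (range (\<lambda>i. x' i \<omega>)))"
    unfolding meas_corr_def by (intro allI impI sets_closure_range_meets_open[OF x'm])
  moreover have "nonempty_compact_values M (\<lambda>\<omega>. closure (range (\<lambda>i. x' i \<omega>)))"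
  proof (rule nonempty_compact_values_closure_range[where b="\<lambda>\<omega>. max (b \<omega>) 0"])
    fix \<omega> i assume "\<omega> \<in> space M"
    then show "norm (x' i \<omega>) \<le> max (b \<omega>) 0"
      using N[of \<omega> i] unfolding x'_def by (cases "\<omega> \<in> N") auto
  qed
  ultimately show ?thesis by blast
qed

section \<open>Stable compactness of stable, sequentially closed, bounded sets\<close>

lemma decseq_compact_Inter_meets_iff:
  fixes X :: "nat \<Rightarrow> 'b::euclidean_space set"
  assumes cX: "\<And>n. compact (X n)" and dec: "\<And>n. X (Suc n) \<subseteq> X n" and C: "closed C"
  shows "(\<Inter>n. X n) \<inter> C \<noteq> {} \<longleftrightarrow> (\<forall>n. X n \<inter> C \<noteq> {})"
proof
  assume "(\<Inter>n. X n) \<inter> C \<noteq> {}"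
  then show "\<forall>n. X n \<inter> C \<noteq> {}" by blast
next
  assume H: "\<forall>n. X n \<inter> C \<noteq> {}"
  have "\<Inter>(range (\<lambda>n. X n \<inter> C)) \<noteq> {}"
  proof (rule compact_nest)
    show "compact (X n \<inter> C)" for n using compact_Int_closed[OF cX C] .
    show "X n \<inter> C \<noteq> {}" for n using H by blast
    show "X n \<inter> C \<subseteq> X m \<inter> C" if "m \<le> n" for m n
      using lift_Suc_antimono_le[of X, OF dec that] by blast
  qed
  then show "(\<Inter>n. X n) \<inter> C \<noteq> {}" by blast
qed

lemma sets_Inter_closure_ranges_meet:
  fixes x :: "nat \<Rightarrow> nat \<Rightarrow> 'a \<Rightarrow> 'b::euclidean_space"
  assumes [measurable]: "\<And>n i. x n i \<in> borel_measurable M" and [measurable]: "N \<in> sets M"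
    and bdd: "\<And>\<omega> n. \<omega> \<in> space M - N \<Longrightarrow> bounded (range (\<lambda>i. x n i \<omega>))"
    and dec: "\<And>\<omega> n. \<omega> \<in> space M - N \<Longrightarrow>
      closure (range (\<lambda>i. x (Suc n) i \<omega>)) \<subseteq> closure (range (\<lambda>i. x n i \<omega>))"
    and C: "closed C" "C \<noteq> {}"
  shows "{\<omega> \<in> space M - N. (\<Inter>n. closure (range (\<lambda>i. x n i \<omega>))) \<inter> C \<noteq> {}} \<in> sets M"
proof -
  have "{\<omega> \<in> space M - N. (\<Inter>n. closure (range (\<lambda>i. x n i \<omega>))) \<inter> C \<noteq> {}} =
      (space M - N) \<inter> (\<Inter>n. {\<omega>\<in>space M. \<forall>m::nat. \<exists>i. infdist (x n i \<omega>) C < 1 / Suc m})"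
  proof (rule set_eqI)
    fix \<omega>
    show "\<omega> \<in> {\<omega> \<in> space M - N. (\<Inter>n. closure (range (\<lambda>i. x n i \<omega>))) \<inter> C \<noteq> {}} \<longleftrightarrow>
      \<omega> \<in> (space M - N) \<inter> (\<Inter>n. {\<omega>\<in>space M. \<forall>m::nat. \<exists>i. infdist (x n i \<omega>) C < 1 / Suc m})"
    proof (cases "\<omega> \<in> space M - N")
      case True
      have "(\<Inter>n. closure (range (\<lambda>i. x n i \<omega>))) \<inter> C \<noteq> {} \<longleftrightarrow>
          (\<forall>n. closure (range (\<lambda>i. x n i \<omega>)) \<inter> C \<noteq> {})"
        using decseq_compact_Inter_meets_iff[of "\<lambda>n. closure (range (\<lambda>i. x n i \<omega>))" C]
          bdd[OF True] dec[OF True] C(1) by simp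
      also have "\<dots> \<longleftrightarrow> (\<forall>n. \<forall>m::nat. \<exists>i. infdist (x n i \<omega>) C < 1 / Suc m)"
        using closure_range_meets_closed_iff_infdist[OF bdd[OF True] C] by simp
      finally show ?thesis using True by blast
    qed blast
  qed
  moreover have "(\<Inter>n. {\<omega>\<in>space M. \<forall>m::nat. \<exists>i. infdist (x n i \<omega>) C < 1 / Suc m}) \<in> sets M"
    by measurable
  ultimately show ?thesis by auto
qed

lemma exists_measurable_selector_Inter_closure_ranges:
  fixes x :: "nat \<Rightarrow> nat \<Rightarrow> 'a \<Rightarrow> 'b::euclidean_space"
  assumes [measurable]: "\<And>n i. x n i \<in> borel_measurable M" and N: "N \<in> null_sets M"
    and bdd: "\<And>\<omega> n. \<omega> \<in> space M - N \<Longrightarrow> bounded (range (\<lambda>i. x n i \<omega>))"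
    and dec: "\<And>\<omega> n. \<omega> \<in> space M - N \<Longrightarrow>
      closure (range (\<lambda>i. x (Suc n) i \<omega>)) \<subseteq> closure (range (\<lambda>i. x n i \<omega>))"
  shows "\<exists>c\<in>borel_measurable M. AE \<omega> in M. \<forall>n. c \<omega> \<in> closure (range (\<lambda>i. x n i \<omega>))"
proof -
  have [measurable]: "N \<in> sets M" using N by blast
  define T where "T \<omega> = (if \<omega> \<in> N then {0} else (\<Inter>n. closure (range (\<lambda>i. x n i \<omega>))))" for \<omega>
  have "\<exists>c\<in>borel_measurable M. \<forall>\<omega>\<in>space M. c \<omega> \<in> T \<omega>"
  proof (rule exists_measurable_selector_closed)
    fix \<omega> assume \<omega>: "\<omega> \<in> space M"
    show "T \<omega> \<noteq> {}"
    proof (cases "\<omega> \<in> N")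
      case False
      then have \<omega>N: "\<omega> \<in> space M - N" using \<omega> by blast
      have "(\<Inter>n. closure (range (\<lambda>i. x n i \<omega>))) \<inter> UNIV \<noteq> {}"
        using decseq_compact_Inter_meets_iff[of "\<lambda>n. closure (range (\<lambda>i. x n i \<omega>))" UNIV,
            OF _ dec[OF \<omega>N] closed_UNIV] bdd[OF \<omega>N] by simp
      then show ?thesis using False unfolding T_def by simp
    qed (simp add: T_def)
    show "closed (T \<omega>)" unfolding T_def by auto
  next
    fix c t
    show "{\<omega> \<in> space M. T \<omega> \<inter> cball c t \<noteq> {}} \<in> sets M"
    proof (cases "t < 0")
      case False
      have "{\<omega> \<in> space M. T \<omega> \<inter> cball c t \<noteq> {}} = (N \<inter> space M \<inter> {\<omega>. 0 \<in> cball c t}) \<union>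
          {\<omega> \<in> space M - N. (\<Inter>n. closure (range (\<lambda>i. x n i \<omega>))) \<inter> cball c t \<noteq> {}}"
        using sets.sets_into_space[of N M] unfolding T_def by auto
      moreover have "{\<omega> \<in> space M - N. (\<Inter>n. closure (range (\<lambda>i. x n i \<omega>))) \<inter> cball c t \<noteq> {}} \<in> sets M"
        using False by (intro sets_Inter_closure_ranges_meet bdd dec) auto
      moreover have "N \<inter> space M \<inter> {\<omega>. 0 \<in> cball c t} \<in> sets M"
        by (cases "0 \<in> cball c t") auto
      ultimately show ?thesis by auto
    qed simp
  qed
  then obtain c where "c \<in> borel_measurable M" and cT: "\<And>\<omega>. \<omega> \<in> space M \<Longrightarrow> c \<omega> \<in> T \<omega>" by blast
  moreover have "AE \<omega> in M. \<forall>n. c \<omega> \<in> closure (range (\<lambda>i. x n i \<omega>))"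
    using AE_not_in[OF N] AE_space
  proof eventually_elim
    case (elim \<omega>)
    then show ?case using cT[OF elim(2)] by (simp add: T_def)
  qed
  ultimately show ?thesis by blast
qed

lemma L0_filter_base_decreasing_chain:
  assumes F: "L0_filter M K \<F>" and BF: "\<B> \<subseteq> \<F>" and base: "\<And>F. F \<in> \<F> \<Longrightarrow> \<exists>B\<in>\<B>. B \<subseteq> F"
    and Bs: "\<And>n. Bs n \<in> \<B>"
  obtains C where "\<And>n. C n \<in> \<B>" "\<And>n. C n \<subseteq> Bs n" "\<And>n. C (Suc n) \<subseteq> C n"
proof -
  have int: "\<And>F G. F \<in> \<F> \<Longrightarrow> G \<in> \<F> \<Longrightarrow> F \<inter> G \<in> \<F>" using F unfolding L0_filter_def by blast
  have "\<exists>C. \<forall>n. (C n \<in> \<B> \<and> C n \<subseteq> Bs n) \<and> C (Suc n) \<subseteq> C n"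
  proof (rule dependent_nat_choice)
    show "\<exists>B. B \<in> \<B> \<and> B \<subseteq> Bs 0" using Bs by blast
    fix B n assume B: "B \<in> \<B> \<and> B \<subseteq> Bs n"
    have "B \<inter> Bs (Suc n) \<in> \<F>" using int B BF Bs by blast
    then obtain B' where "B' \<in> \<B>" "B' \<subseteq> B \<inter> Bs (Suc n)" using base by blast
    then show "\<exists>B'. (B' \<in> \<B> \<and> B' \<subseteq> Bs (Suc n)) \<and> B' \<subseteq> B" by blast
  qed
  then obtain C where "\<And>n. C n \<in> \<B>" "\<And>n. C n \<subseteq> Bs n" "\<And>n. C (Suc n) \<subseteq> C n" by blast
  then show ?thesis by (rule that)
qed

lemma AE_in_L0_ess_range_if_misses_dominated:
  assumes dom: "\<And>j. AE \<omega> in M. \<omega> \<in> L0_ess_range_misses M B j \<longrightarrow> \<omega> \<in> L0_ess_range_misses M (Bs j) j"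
    and c: "AE \<omega> in M. \<forall>j. c \<omega> \<in> L0_ess_range M (Bs j) \<omega>"
  shows "AE \<omega> in M. c \<omega> \<in> L0_ess_range M B \<omega>"
proof -
  have "AE \<omega> in M. \<forall>j. \<omega> \<in> L0_ess_range_misses M B j \<longrightarrow> \<omega> \<in> L0_ess_range_misses M (Bs j) j"
    using dom by (subst AE_all_countable) blast
  then show ?thesis using c AE_space
  proof eventually_elim
    case (elim \<omega>)
    show ?case
    proof (rule ccontr)
      assume nin: "c \<omega> \<notin> L0_ess_range M B \<omega>"
      have "open (- L0_ess_range M B \<omega>)" unfolding L0_ess_range_def by auto
      then obtain \<epsilon> where e: "0 < \<epsilon>" "ball (c \<omega>) \<epsilon> \<subseteq> - L0_ess_range M B \<omega>"
        using nin open_contains_ball by blast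
      obtain j where j: "c \<omega> \<in> basis_ball j" "basis_cball j \<subseteq> ball (c \<omega>) \<epsilon>"
        using basis_ball_refines[OF e(1)] by blast
      have "L0_ess_range M B \<omega> \<inter> basis_ball j = {}" using j(2) e(2) basis_ball_subset_cball by blast
      then have "\<omega> \<in> L0_ess_range_misses M B j" using elim(3) unfolding L0_ess_range_misses_def by blast
      then have "L0_ess_range M (Bs j) \<omega> \<inter> basis_ball j = {}"
        using elim(1) unfolding L0_ess_range_misses_def by blast
      then show False using j(1) elim(2) by blast
    qed
  qed
qed

lemma L0_cluster_if_AE_in_ess_range:
  fixes \<B> :: "('a \<Rightarrow> 'b::euclidean_space) set set"
  assumes M: "prob_space M" and c: "c \<in> L0 M" and base: "\<And>F. F \<in> \<F> \<Longrightarrow> \<exists>B\<in>\<B>. B \<subseteq> F"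
    and st: "\<And>B. B \<in> \<B> \<Longrightarrow> L0_stable M B"
    and ess: "\<And>B. B \<in> \<B> \<Longrightarrow> AE \<omega> in M. c \<omega> \<in> L0_ess_range M B \<omega>"
  shows "L0_cluster M \<F> c"
  unfolding L0_cluster_def
proof (intro conjI ballI allI impI)
  show "c \<in> L0 M" by fact
  fix F U assume F: "F \<in> \<F>" and U: "L0_open M U \<and> c \<in> U"
  obtain B where B: "B \<in> \<B>" "B \<subseteq> F" using base[OF F] by blast
  obtain z \<rho> where z: "z \<in> L0 M" and \<rho>: "L0_pos M \<rho>" and cz: "c \<in> L0_ball M z \<rho>"
    and zU: "L0_ball M z \<rho> \<subseteq> U"
    using U unfolding L0_open_def by blast
  have stB: "L0_stable M B" using st[OF B(1)] .
  have "AE \<omega> in M. norm (z \<omega> - c \<omega>) < \<rho> \<omega>" using cz unfolding L0_ball_def by blast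
  then have "AE \<omega> in M. \<exists>i. norm (z \<omega> - L0_dense_seq M B i \<omega>) < \<rho> \<omega>"
    using ess[OF B(1)]
  proof eventually_elim
    case (elim \<omega>)
    have "0 < \<rho> \<omega> - norm (z \<omega> - c \<omega>)" using elim(1) by simp
    then obtain y where y: "y \<in> range (\<lambda>i. L0_dense_seq M B i \<omega>)"
      "dist y (c \<omega>) < \<rho> \<omega> - norm (z \<omega> - c \<omega>)"
      using elim(2) unfolding L0_ess_range_def closure_approachable by blast
    then obtain i where i: "y = L0_dense_seq M B i \<omega>" by blast
    have "norm (z \<omega> - y) \<le> norm (z \<omega> - c \<omega>) + norm (c \<omega> - y)"
      using norm_triangle_ineq[of "z \<omega> - c \<omega>" "c \<omega> - y"] by simp
    then have "norm (z \<omega> - y) < \<rho> \<omega>" using y(2) by (simp add: dist_norm norm_minus_commute)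
    then show ?case using i by blast
  qed
  moreover have "z \<in> borel_measurable M" "\<rho> \<in> borel_measurable M"
    using z \<rho> unfolding L0_def L0_pos_def by auto
  ultimately obtain y where "y \<in> B" "AE \<omega> in M. norm (z \<omega> - y \<omega>) < \<rho> \<omega>"
    using L0_stable_meets_L0_ball[where xs="L0_dense_seq M B", OF stB L0_dense_seq_in[OF M stB]] by blast
  then have "y \<in> L0_ball M z \<rho>" "y \<in> B"
    using L0_stable_measurable[OF stB] unfolding L0_ball_def L0_def by auto
  then show "U \<inter> F \<noteq> {}" using zU B(2) by blast
qed

lemma exists_measurable_selector_decreasing_L0_ess_ranges:
  fixes C :: "nat \<Rightarrow> ('a \<Rightarrow> 'b::euclidean_space) set"
  assumes M: "prob_space M" and stC: "\<And>n. L0_stable M (C n)" and dec: "\<And>n. C (Suc n) \<subseteq> C n"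
    and bd: "L0_bounded M (C 0)"
  shows "\<exists>c\<in>borel_measurable M. AE \<omega> in M. \<forall>n. c \<omega> \<in> L0_ess_range M (C n) \<omega>"
proof -
  have "C n \<subseteq> C 0" for n using lift_Suc_antimono_le[of C 0 n, OF dec] by simp
  then have xC: "L0_dense_seq M (C n) i \<in> C 0" for n i using L0_dense_seq_in[OF M stC] by blast
  have [measurable]: "L0_dense_seq M (C n) i \<in> borel_measurable M" for n i
    using L0_stable_measurable[OF stC xC] .
  obtain b where b: "\<And>y. y \<in> C 0 \<Longrightarrow> AE \<omega> in M. norm (y \<omega>) \<le> b \<omega>"
    using bd unfolding L0_bounded_def by blast
  have "AE \<omega> in M. (\<forall>n i. norm (L0_dense_seq M (C n) i \<omega>) \<le> b \<omega>) \<and>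
      (\<forall>n. L0_ess_range M (C (Suc n)) \<omega> \<subseteq> L0_ess_range M (C n) \<omega>)"
  proof -
    have "AE \<omega> in M. \<forall>n i. norm (L0_dense_seq M (C n) i \<omega>) \<le> b \<omega>"
      using b[OF xC] by (simp add: AE_all_countable)
    moreover have "AE \<omega> in M. \<forall>n. L0_ess_range M (C (Suc n)) \<omega> \<subseteq> L0_ess_range M (C n) \<omega>"
      using AE_L0_ess_range_mono[OF M stC stC dec] by (simp add: AE_all_countable)
    ultimately show ?thesis by eventually_elim blast
  qed
  then obtain N where N: "\<And>\<omega>. \<omega> \<in> space M - N \<Longrightarrow> (\<forall>n i. norm (L0_dense_seq M (C n) i \<omega>) \<le> b \<omega>) \<and>
      (\<forall>n. L0_ess_range M (C (Suc n)) \<omega> \<subseteq> L0_ess_range M (C n) \<omega>)" and Nnull: "N \<in> null_sets M"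
    by (rule AE_E3) auto
  show ?thesis
    unfolding L0_ess_range_def
  proof (rule exists_measurable_selector_Inter_closure_ranges[OF _ Nnull])
    fix \<omega> n assume \<omega>: "\<omega> \<in> space M - N"
    have "range (\<lambda>i. L0_dense_seq M (C n) i \<omega>) \<subseteq> cball 0 (b \<omega>)" using N[OF \<omega>] by auto
    then show "bounded (range (\<lambda>i. L0_dense_seq M (C n) i \<omega>))" using bounded_subset by blast
    show "closure (range (\<lambda>i. L0_dense_seq M (C (Suc n)) i \<omega>)) \<subseteq> closure (range (\<lambda>i. L0_dense_seq M (C n) i \<omega>))"
      using N[OF \<omega>] unfolding L0_ess_range_def by blast
  qed measurable
qed

lemma L0_stable_seq_closed_bounded_imp_stable_compact:
  fixes K :: "('a \<Rightarrow> 'b::euclidean_space) set"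
  assumes M: "prob_space M" and K: "L0_stable M K" and sc: "L0_seq_closed M K" and bd: "L0_bounded M K"
  shows "L0_stable_compact M K"
  unfolding L0_stable_compact_def
proof (intro conjI allI impI)
  show "L0_stable M K" by fact
  fix \<F> assume SF: "L0_stable_filter M K \<F>"
  then have F: "L0_filter M K \<F>" unfolding L0_stable_filter_def by blast
  obtain \<B> where BF: "\<B> \<subseteq> \<F>" and base: "\<And>F. F \<in> \<F> \<Longrightarrow> \<exists>B\<in>\<B>. B \<subseteq> F"
    and st: "\<And>B. B \<in> \<B> \<Longrightarrow> L0_stable M B"
    and pc: "\<And>A Ys. L0_partition M A \<Longrightarrow> (\<And>k. Ys k \<in> \<B>) \<Longrightarrow> L0_paste_set M A Ys \<in> \<B>"
    using SF unfolding L0_stable_filter_def by metis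
  have FK: "\<And>F. F \<in> \<F> \<Longrightarrow> F \<subseteq> K" and "K \<in> \<F>" using F unfolding L0_filter_def by blast+
  obtain B0 where "B0 \<in> \<B>" using base[OF \<open>K \<in> \<F>\<close>] by blast
  then have Bne: "\<B> \<noteq> {}" by blast
  have "\<forall>j. \<exists>B0\<in>\<B>. \<forall>B\<in>\<B>. AE \<omega> in M. \<omega> \<in> L0_ess_range_misses M B j \<longrightarrow> \<omega> \<in> L0_ess_range_misses M B0 j"
    using L0_ess_range_misses_AE_maximal[OF M Bne st pc] by blast
  then obtain Bmax where Bmax: "\<And>j. Bmax j \<in> \<B>"
    and dom: "\<And>j B. B \<in> \<B> \<Longrightarrow> AE \<omega> in M. \<omega> \<in> L0_ess_range_misses M B j \<longrightarrow> \<omega> \<in> L0_ess_range_misses M (Bmax j) j"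
    by metis
  obtain C where C: "\<And>n. C n \<in> \<B>" "\<And>n. C n \<subseteq> Bmax n" "\<And>n. C (Suc n) \<subseteq> C n"
    using L0_filter_base_decreasing_chain[where Bs=Bmax, OF F BF base Bmax] by blast
  have stC: "L0_stable M (C n)" for n using st C(1) by blast
  have C0K: "C 0 \<subseteq> K" using FK BF C(1) by blast
  then have "L0_bounded M (C 0)" using bd unfolding L0_bounded_def by blast
  then obtain c where c[measurable]: "c \<in> borel_measurable M"
    and cC: "AE \<omega> in M. \<forall>n. c \<omega> \<in> L0_ess_range M (C n) \<omega>"
    using exists_measurable_selector_decreasing_L0_ess_ranges[where C=C, OF M stC C(3)] by blast
  have xK: "L0_dense_seq M (C 0) i \<in> K" for i using L0_dense_seq_in[OF M stC] C0K by blast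
  have "c \<in> K"
  proof (rule L0_seq_closed_AE_closure_mem[OF K sc xK c])
    show "AE \<omega> in M. c \<omega> \<in> closure (range (\<lambda>i. L0_dense_seq M (C 0) i \<omega>))"
      using cC by eventually_elim (simp add: L0_ess_range_def)
  qed
  moreover have "L0_cluster M \<F> c"
  proof (rule L0_cluster_if_AE_in_ess_range[OF M _ base st])
    show "c \<in> L0 M" unfolding L0_def by simp
    fix B assume "B \<in> \<B>"
    have "AE \<omega> in M. \<forall>j. L0_ess_range M (C j) \<omega> \<subseteq> L0_ess_range M (Bmax j) \<omega>"
      using AE_L0_ess_range_mono[OF M stC st[OF Bmax] C(2)] by (simp add: AE_all_countable)
    then have "AE \<omega> in M. \<forall>j. c \<omega> \<in> L0_ess_range M (Bmax j) \<omega>"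
      using cC by eventually_elim blast
    then show "AE \<omega> in M. c \<omega> \<in> L0_ess_range M B \<omega>"
      by (rule AE_in_L0_ess_range_if_misses_dominated[OF dom[OF \<open>B \<in> \<B>\<close>]])
  qed
  ultimately show "\<exists>x\<in>K. L0_cluster M \<F> x" by blast
qed

theorem mainTheorem12:
  fixes M :: "'a measure" and K :: "('a \<Rightarrow> real ^ 'd) set"
  assumes "prob_space M" and "L0_saturated M K"
  shows "(L0_stable_compact M K \<longleftrightarrow> L0_stable M K \<and> L0_closed M K \<and> L0_bounded M K)
    \<and> (L0_stable M K \<and> L0_closed M K \<and> L0_bounded M K \<longleftrightarrow>
         L0_stable M K \<and> L0_seq_closed M K \<and> L0_bounded M K)
    \<and> (L0_stable M K \<and> L0_seq_closed M K \<and> L0_bounded M K \<longleftrightarrow>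
         (\<exists>S. meas_corr M S \<and> nonempty_compact_values M S \<and> K = L0_selectors M S))
    \<and> (\<forall>S S'. meas_corr M S \<and> nonempty_compact_values M S \<and> K = L0_selectors M S \<and>
              meas_corr M S' \<and> nonempty_compact_values M S' \<and> K = L0_selectors M S' \<longrightarrow>
              (AE \<omega> in M. S \<omega> = S' \<omega>))"
proof -
  note M = \<open>prob_space M\<close>
  have closed_iff: "L0_stable M K \<and> L0_closed M K \<and> L0_bounded M K \<longleftrightarrow>
      L0_stable M K \<and> L0_seq_closed M K \<and> L0_bounded M K"
    using L0_closed_imp_seq_closed[of M K] L0_seq_closed_imp_closed[OF M, of K] by blast
  have compact_iff: "L0_stable_compact M K \<longleftrightarrow> L0_stable M K \<and> L0_seq_closed M K \<and> L0_bounded M K"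
  proof
    assume C: "L0_stable_compact M K"
    then show "L0_stable M K \<and> L0_seq_closed M K \<and> L0_bounded M K"
      using L0_stable_compact_imp_seq_closed[OF C] L0_stable_compact_imp_bounded[OF M C]
      unfolding L0_stable_compact_def by blast
  qed (use L0_stable_seq_closed_bounded_imp_stable_compact[OF M] in blast)
  have selectors_iff: "L0_stable M K \<and> L0_seq_closed M K \<and> L0_bounded M K \<longleftrightarrow>
      (\<exists>S. meas_corr M S \<and> nonempty_compact_values M S \<and> K = L0_selectors M S)"
  proof
    assume "\<exists>S. meas_corr M S \<and> nonempty_compact_values M S \<and> K = L0_selectors M S"
    then obtain S where "meas_corr M S" "nonempty_compact_values M S" "K = L0_selectors M S" by blast
    then show "L0_stable M K \<and> L0_seq_closed M K \<and> L0_bounded M K"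
      using L0_stable_selectors L0_seq_closed_selectors L0_bounded_selectors by blast
  qed (use L0_stable_seq_closed_bounded_imp_selectors[OF M] in blast)
  have unique: "\<forall>S S'. meas_corr M S \<and> nonempty_compact_values M S \<and> K = L0_selectors M S \<and>
      meas_corr M S' \<and> nonempty_compact_values M S' \<and> K = L0_selectors M S' \<longrightarrow>
      (AE \<omega> in M. S \<omega> = S' \<omega>)"
    using AE_eq_if_L0_selectors_eq by metis
  show ?thesis using closed_iff compact_iff selectors_iff unique by blast
qed

end
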